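(* Let $S$ be a finite-dimensional system with Hamiltonian $H_S$ and state $\rho$. Then $$F_{H_S}(\rho)=\min_{\Phi_\rho,H_A}F_{H_{\rm tot}}(\Phi_\rho)=4\min_{\Phi_\rho,H_A}V_{H_{\rm tot}}(\Phi_\rho),$$ where the minimum is over all auxiliary systems $A$ with Hamiltonian $H_A$ and all pure states $|\Phi_\rho\rangle_{SA}$ with $\mathrm{Tr}_A|\Phi_\rho\rangle\langle\Phi_\rho|=\rho$, and $H_{\rm tot}=H_S\otimes I_A+I_S\otimes H_A$; in particular the minimum is attained.
   Context: Quantum Fisher information (QFI): for a state $\rho=\sum_j p_j|\psi_j\rangle\langle\psi_j|$ (spectral decomposition) and Hermitian $H$, $F_H(\rho)=2\sum_{j,k:\,p_j+p_k>0}\frac{(p_j-p_k)^2}{p_j+p_k}|\langle\psi_j|H|\psi_k\rangle|^2$. For a pure state $F_H(\psi)=4V_H(\psi)$ where $V_H(\psi)=\langle\psi|H^2|\psi\rangle-\langle\psi|H|\psi\rangle^2$. *)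

theory Defs
  imports "Jordan_Normal_Form.Matrix" "Jordan_Normal_Form.Conjugate"
begin

definition hermitian_mat :: "nat \<Rightarrow> complex mat \<Rightarrow> bool" where
  "hermitian_mat n A \<longleftrightarrow> A \<in> carrier_mat n n \<and>
     (\<forall>i<n. \<forall>j<n. A $$ (i,j) = cnj (A $$ (j,i)))"

definition mat_trace :: "complex mat \<Rightarrow> complex" where
  "mat_trace A = (\<Sum>i<dim_row A. A $$ (i,i))"

definition density_mat :: "nat \<Rightarrow> complex mat \<Rightarrow> bool" where
  "density_mat n \<rho> \<longleftrightarrow> hermitian_mat n \<rho> \<and>
     (\<forall>v \<in> carrier_vec n. 0 \<le> Re ((\<rho> *\<^sub>v v) \<bullet>c v)) \<and>
     mat_trace \<rho> = 1"

definition ketbra :: "complex vec \<Rightarrow> complex vec \<Rightarrow> complex mat" where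
  "ketbra v w = mat (dim_vec v) (dim_vec w) (\<lambda>(i,j). v $ i * cnj (w $ j))"

definition braket :: "complex vec \<Rightarrow> complex mat \<Rightarrow> complex vec \<Rightarrow> complex" where
  "braket v A w = (A *\<^sub>v w) \<bullet>c v"

definition spectral_decomp :: "nat \<Rightarrow> complex mat \<Rightarrow> (nat \<Rightarrow> real) \<Rightarrow> (nat \<Rightarrow> complex vec) \<Rightarrow> bool" where
  "spectral_decomp n \<rho> p \<psi> \<longleftrightarrow>
     (\<forall>j<n. \<psi> j \<in> carrier_vec n) \<and>
     (\<forall>j<n. \<forall>k<n. \<psi> j \<bullet>c \<psi> k = (if j = k then 1 else 0)) \<and>
     \<rho> = mat n n (\<lambda>(a,b). \<Sum>j<n. complex_of_real (p j) * (ketbra (\<psi> j) (\<psi> j)) $$ (a,b))"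

definition QFI :: "nat \<Rightarrow> complex mat \<Rightarrow> complex mat \<Rightarrow> real" where
  "QFI n \<rho> H = (let (p, \<psi>) = (SOME (p, \<psi>). spectral_decomp n \<rho> p \<psi>) in
     2 * (\<Sum>j<n. \<Sum>k<n. if p j + p k > 0 then
        (p j - p k)^2 / (p j + p k) * (cmod (braket (\<psi> j) H (\<psi> k)))^2 else 0))"

definition variance :: "complex mat \<Rightarrow> complex vec \<Rightarrow> real" where
  "variance H \<psi> = Re (braket \<psi> (H * H) \<psi>) - (Re (braket \<psi> H \<psi>))^2"

text \<open>Kronecker product; index (i,a) of C^n \<otimes> C^m is i*m + a.\<close>
definition tensor_mat :: "complex mat \<Rightarrow> complex mat \<Rightarrow> complex mat" where
  "tensor_mat A B = mat (dim_row A * dim_row B) (dim_col A * dim_col B)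
     (\<lambda>(i,j). A $$ (i div dim_row B, j div dim_col B) * B $$ (i mod dim_row B, j mod dim_col B))"

definition ptrace2 :: "nat \<Rightarrow> nat \<Rightarrow> complex mat \<Rightarrow> complex mat" where
  "ptrace2 n m M = mat n n (\<lambda>(i,j). \<Sum>a<m. M $$ (i*m + a, j*m + a))"

definition H_tot :: "nat \<Rightarrow> nat \<Rightarrow> complex mat \<Rightarrow> complex mat \<Rightarrow> complex mat" where
  "H_tot n m HS HA = tensor_mat HS (1\<^sub>m m) + tensor_mat (1\<^sub>m n) HA"

definition purification :: "nat \<Rightarrow> nat \<Rightarrow> complex mat \<Rightarrow> complex vec \<Rightarrow> bool" where
  "purification n m \<rho> \<Phi> \<longleftrightarrow> \<Phi> \<in> carrier_vec (n*m) \<and> \<Phi> \<bullet>c \<Phi> = 1 \<and>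
     ptrace2 n m (ketbra \<Phi> \<Phi>) = \<rho>"

end

theory Submission
  imports Defs "Jordan_Normal_Form.Schur_Decomposition"
begin

text \<open>Write \<rho> = \<Sum>_j p_j |\<psi>_j\<rangle>\<langle>\<psi>_j| and a purification as \<Phi> = \<Sum>_j \<psi>_j \<otimes> \<alpha>_j; the
  partial-trace condition says exactly that the \<alpha>_j are orthogonal with squared norms p_j. In the
  basis \<psi>_k \<otimes> e_a the centred vector (H_tot - \<langle>H_tot\<rangle>) \<Phi> has components
  B_k = \<Sum>_j h_kj \<alpha>_j + G \<alpha>_k, where h_kj = \<langle>\<psi>_k|H_S|\<psi>_j\<rangle> and G is H_A shifted by a scalar.
  Bessel's inequality for the orthogonal family \<alpha>_l bounds |B_k|^2 below by
  \<Sum>_l |h_kl p_l + \<langle>G \<alpha>_k, \<alpha>_l\<rangle>|^2 / p_l, and pairing the terms (k,l) and (l,k) by a weighted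
  Cauchy-Schwarz inequality gives 4 V \<ge> F_{H_S}(\<rho>); for the pure state \<Phi> also F_{H_tot}(\<Phi>) = 4 V.
  Equality is attained by the canonical purification \<Sum>_a \<surd>p_a \<psi>_a \<otimes> e_a together with
  (H_A)_ak = -2 \<surd>(p_a p_k) / (p_a + p_k) h_ka, for which already |H_tot \<Phi>|^2 = F_{H_S}(\<rho>) / 4.\<close>

lemma sum_swap3:
  "(\<Sum>i\<in>A. \<Sum>j\<in>B. \<Sum>k\<in>C. f i j k) = (\<Sum>k\<in>C. \<Sum>i\<in>A. \<Sum>j\<in>B. (f i j k :: 'a :: comm_monoid_add))"
  by (simp add: sum.swap[of _ C] sum.swap[of _ C B])

lemma sum_swap4:
  "(\<Sum>i\<in>A. \<Sum>j\<in>B. \<Sum>k\<in>C. \<Sum>l\<in>D. f i j k l)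
    = (\<Sum>k\<in>C. \<Sum>l\<in>D. \<Sum>i\<in>A. \<Sum>j\<in>B. (f i j k l :: 'a :: comm_monoid_add))"
proof -
  have "(\<Sum>i\<in>A. \<Sum>j\<in>B. \<Sum>k\<in>C. \<Sum>l\<in>D. f i j k l) = (\<Sum>i\<in>A. \<Sum>k\<in>C. \<Sum>l\<in>D. \<Sum>j\<in>B. f i j k l)"
    by (intro sum.cong refl) (rule sum_swap3[symmetric])
  also have "\<dots> = (\<Sum>k\<in>C. \<Sum>l\<in>D. \<Sum>i\<in>A. \<Sum>j\<in>B. f i j k l)"
    by (rule sum_swap3[symmetric])
  finally show ?thesis .
qed

lemma sum_mult_mult_sum:
  "(\<Sum>i\<in>A. f i) * c * (\<Sum>j\<in>B. g j) = (\<Sum>i\<in>A. \<Sum>j\<in>B. f i * c * (g j :: 'a :: comm_semiring_0))"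
  unfolding sum_distrib_right[of f A c] sum_product ..

lemma sum_if_eq_replace:
  assumes "finite A" "j \<in> A"
  shows "(\<Sum>k\<in>A. if k = j then x else f k) = x + (sum f A - (f j :: 'a :: ab_group_add))"
proof -
  have "(\<Sum>k\<in>A - {j}. if k = j then x else f k) = sum f (A - {j})" by (rule sum.cong) auto
  then show ?thesis
    using sum.remove[OF assms, of "\<lambda>k. if k = j then x else f k"] sum.remove[OF assms, of f] by simp
qed

lemma sum_lessThan_add:
  fixes k m :: nat
  shows "(\<Sum>y<k + m. g y) = (\<Sum>y<k. g y) + (\<Sum>a<m. (g (k + a) :: 'a :: comm_monoid_add))"
  by (induction m) (auto simp: add.assoc)

lemma sum_lessThan_mult:
  fixes n m :: nat
  shows "(\<Sum>y<n*m. g y) = (\<Sum>i<n. \<Sum>a<m. (g (i*m + a) :: 'a :: comm_monoid_add))"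
  by (induction n) (simp_all add: sum_lessThan_add add.commute[of m])

section \<open>Inner products and orthonormal bases\<close>

lemma cscalar_prod_sum:
  assumes "v \<in> carrier_vec N" "w \<in> carrier_vec N"
  shows "v \<bullet>c w = (\<Sum>i<N. v$i * cnj (w$i))"
  using assms by (simp add: scalar_prod_def atLeast0LessThan)

lemma mult_mat_vec_sum:
  assumes "A \<in> carrier_mat N M" "x \<in> carrier_vec M" "i < N"
  shows "(A *\<^sub>v x) $ i = (\<Sum>j<M. A$$(i,j) * x$j)"
  using assms by (simp add: scalar_prod_def atLeast0LessThan row_def)

lemma hermitian_matD:
  assumes "hermitian_mat N A"
  shows "A \<in> carrier_mat N N" "\<And>i j. i < N \<Longrightarrow> j < N \<Longrightarrow> cnj (A$$(i,j)) = A$$(j,i)"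
  using assms unfolding hermitian_mat_def by (blast, metis complex_cnj_cnj)

lemma cscalar_prod_self:
  assumes "v \<in> carrier_vec N"
  shows "v \<bullet>c v = complex_of_real (\<Sum>i<N. (cmod (v$i))^2)"
  unfolding cscalar_prod_sum[OF assms assms] of_real_sum
  by (rule sum.cong) (auto simp: complex_norm_square[symmetric])

lemma cnj_cscalar_prod:
  assumes "v \<in> carrier_vec N" "w \<in> carrier_vec N"
  shows "cnj (v \<bullet>c w) = w \<bullet>c v"
  unfolding cscalar_prod_sum[OF assms] cscalar_prod_sum[OF assms(2,1)]
  by (simp add: mult.commute)

lemma cscalar_prod_smult:
  assumes "v \<in> carrier_vec N" "w \<in> carrier_vec N"
  shows "(c \<cdot>\<^sub>v v) \<bullet>c (d \<cdot>\<^sub>v w) = c * cnj d * (v \<bullet>c w)"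
  using assms by (simp add: cscalar_prod_sum[of _ N] sum_distrib_left mult_ac)

lemma cscalar_prod_smult_left:
  fixes v w :: "complex vec"
  shows "v \<in> carrier_vec N \<Longrightarrow> w \<in> carrier_vec N \<Longrightarrow> (c \<cdot>\<^sub>v v) \<bullet>c w = c * (v \<bullet>c w)"
  using cscalar_prod_smult[of v N w c 1] by simp

lemma cscalar_prod_smult_right:
  fixes v w :: "complex vec"
  shows "v \<in> carrier_vec N \<Longrightarrow> w \<in> carrier_vec N \<Longrightarrow> v \<bullet>c (d \<cdot>\<^sub>v w) = cnj d * (v \<bullet>c w)"
  using cscalar_prod_smult[of v N w 1 d] by simp

lemma hermitian_cscalar_prod:
  assumes A: "hermitian_mat N A" and x: "x \<in> carrier_vec N" and y: "y \<in> carrier_vec N"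
  shows "(A *\<^sub>v x) \<bullet>c y = x \<bullet>c (A *\<^sub>v y)"
proof -
  note A' = hermitian_matD[OF A]
  have "(A *\<^sub>v x) \<bullet>c y = (\<Sum>i<N. \<Sum>j<N. A$$(i,j) * x$j * cnj (y$i))"
    using A' x y by (simp add: cscalar_prod_sum[of _ N] mult_mat_vec_sum sum_distrib_right del: index_mult_mat_vec)
  also have "\<dots> = (\<Sum>j<N. \<Sum>i<N. A$$(i,j) * x$j * cnj (y$i))"
    by (rule sum.swap)
  also have "\<dots> = (\<Sum>j<N. \<Sum>i<N. x$j * cnj (A$$(j,i) * y$i))"
  proof (intro sum.cong refl)
    fix i j assume "i \<in> {..<N}" "j \<in> {..<N}"
    then show "A$$(i,j) * x$j * cnj (y$i) = x$j * cnj (A$$(j,i) * y$i)"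
      using A'(2)[of j i] by simp
  qed
  also have "\<dots> = x \<bullet>c (A *\<^sub>v y)"
    using A' x y by (simp add: cscalar_prod_sum[of _ N] mult_mat_vec_sum sum_distrib_left cnj_sum del: index_mult_mat_vec)
  finally show ?thesis .
qed

lemma braket_hermitian:
  assumes H: "hermitian_mat N H" and x: "x \<in> carrier_vec N" and y: "y \<in> carrier_vec N"
  shows "braket y H x = cnj (braket x H y)"
proof -
  have "braket y H x = x \<bullet>c (H *\<^sub>v y)" unfolding braket_def by (rule hermitian_cscalar_prod[OF H x y])
  also have "\<dots> = cnj ((H *\<^sub>v y) \<bullet>c x)"
    using cnj_cscalar_prod[of "H *\<^sub>v y" N x] hermitian_matD(1)[OF H] x y by simp
  finally show ?thesis unfolding braket_def .
qed

lemma cscalar_prod_normalized: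
  assumes v: "v \<in> carrier_vec N" "v \<noteq> 0\<^sub>v N"
  defines "u \<equiv> complex_of_real (1 / sqrt (Re (v \<bullet>c v))) \<cdot>\<^sub>v v"
  shows "u \<bullet>c u = 1"
proof -
  define R where "R = (\<Sum>i<N. (cmod (v$i))^2)"
  have vv: "v \<bullet>c v = complex_of_real R" unfolding R_def by (rule cscalar_prod_self[OF v(1)])
  have "R \<noteq> 0" using vv v by auto
  hence "R > 0" unfolding R_def by (metis sum_nonneg zero_le_power2 order_le_less)
  thus ?thesis using v(1) unfolding u_def cscalar_prod_smult[OF v(1) v(1)] vv
    by (simp flip: of_real_mult add: field_simps)
qed

definition orthonormal_basis :: "nat \<Rightarrow> (nat \<Rightarrow> complex vec) \<Rightarrow> bool" where
  "orthonormal_basis N W \<longleftrightarrow> (\<forall>j<N. W j \<in> carrier_vec N) \<and>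
     (\<forall>j<N. \<forall>k<N. W j \<bullet>c W k = (if j = k then 1 else 0))"

lemma orthonormal_basis_carrier:
  "orthonormal_basis N W \<Longrightarrow> j < N \<Longrightarrow> W j \<in> carrier_vec N"
  unfolding orthonormal_basis_def by auto

lemma orthonormal_basis_orthonormal:
  assumes "orthonormal_basis N W" "j < N" "k < N"
  shows "(\<Sum>i<N. W j $ i * cnj (W k $ i)) = (if j = k then 1 else 0)"
  using assms cscalar_prod_sum[of "W j" N "W k"] unfolding orthonormal_basis_def by auto

text \<open>Completeness: the matrix with columns W j is unitary, so its rows are orthonormal too.\<close>

lemma orthonormal_basis_complete:
  assumes W: "orthonormal_basis N W" and "a < N" "b < N"
  shows "(\<Sum>j<N. W j $ a * cnj (W j $ b)) = (if a = b then 1 else 0)"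
proof -
  define M where "M = mat N N (\<lambda>(i,j). W j $ i)"
  define M' where "M' = mat N N (\<lambda>(j,i). cnj (W j $ i))"
  have M: "M \<in> carrier_mat N N" and M': "M' \<in> carrier_mat N N" unfolding M_def M'_def by auto
  have "M' * M = 1\<^sub>m N"
  proof (rule eq_matI)
    fix j k assume "j < dim_row (1\<^sub>m N)" "k < dim_col (1\<^sub>m N)"
    then have jk: "j < N" "k < N" by auto
    have "(M' * M) $$ (j,k) = (\<Sum>i<N. W k $ i * cnj (W j $ i))"
      using jk by (simp add: scalar_prod_def atLeast0LessThan row_def col_def M_def M'_def mult.commute)
    then show "(M' * M) $$ (j,k) = 1\<^sub>m N $$ (j,k)"
      using orthonormal_basis_orthonormal[OF W jk(2,1)] jk by auto
  qed (auto simp: M_def M'_def)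
  then have "M * M' = 1\<^sub>m N" using mat_mult_left_right_inverse[OF M' M] by auto
  moreover have "(M * M') $$ (a,b) = (\<Sum>j<N. W j $ a * cnj (W j $ b))"
    using assms by (simp add: scalar_prod_def atLeast0LessThan row_def col_def M_def M'_def)
  ultimately show ?thesis using assms by auto
qed

lemma orthonormal_basis_expansion:
  assumes W: "orthonormal_basis N W" and x: "x \<in> carrier_vec N" and d: "d < N"
  shows "x $ d = (\<Sum>j<N. (x \<bullet>c W j) * W j $ d)"
proof -
  have "(\<Sum>j<N. (x \<bullet>c W j) * W j $ d) = (\<Sum>j<N. \<Sum>b<N. x$b * (W j $ d * cnj (W j $ b)))"
    using orthonormal_basis_carrier[OF W] x by (simp add: cscalar_prod_sum[of _ N] sum_distrib_left mult_ac)
  also have "\<dots> = (\<Sum>b<N. x$b * (\<Sum>j<N. W j $ d * cnj (W j $ b)))"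
    by (subst sum.swap) (simp add: sum_distrib_left)
  also have "\<dots> = x $ d" using d by (simp add: orthonormal_basis_complete[OF W] if_distrib cong: if_cong)
  finally show ?thesis by simp
qed

lemma cscalar_prod_mult_vec_expansion:
  assumes W: "orthonormal_basis N W" and A: "A \<in> carrier_mat N N"
    and x: "x \<in> carrier_vec N" and y: "y \<in> carrier_vec N"
  shows "(A *\<^sub>v x) \<bullet>c y = (\<Sum>j<N. (x \<bullet>c W j) * ((A *\<^sub>v W j) \<bullet>c y))"
proof -
  note Wc = orthonormal_basis_carrier[OF W]
  have "(A *\<^sub>v x) \<bullet>c y = (\<Sum>c<N. \<Sum>d<N. A$$(c,d) * x$d * cnj (y$c))"
    using A x y by (simp add: cscalar_prod_sum[of _ N] mult_mat_vec_sum sum_distrib_right del: index_mult_mat_vec)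
  also have "\<dots> = (\<Sum>c<N. \<Sum>d<N. \<Sum>j<N. (x \<bullet>c W j) * (A$$(c,d) * W j $ d * cnj (y$c)))"
    by (intro sum.cong refl) (simp add: orthonormal_basis_expansion[OF W x] sum_distrib_left sum_distrib_right mult_ac)
  also have "\<dots> = (\<Sum>j<N. (x \<bullet>c W j) * (\<Sum>c<N. \<Sum>d<N. A$$(c,d) * W j $ d * cnj (y$c)))"
    by (subst sum_swap3) (simp add: sum_distrib_left)
  also have "\<dots> = (\<Sum>j<N. (x \<bullet>c W j) * ((A *\<^sub>v W j) \<bullet>c y))"
    using A Wc y by (simp add: cscalar_prod_sum[of _ N] mult_mat_vec_sum sum_distrib_right del: index_mult_mat_vec)
  finally show ?thesis .
qed

lemma orthonormal_basis_parseval: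
  assumes W: "orthonormal_basis N W" and x: "x \<in> carrier_vec N"
  shows "(\<Sum>k<N. (cmod (x \<bullet>c W k))^2) = (\<Sum>i<N. (cmod (x$i))^2)"
proof -
  note Wc = orthonormal_basis_carrier[OF W]
  have "(\<Sum>k<N. (x \<bullet>c W k) * cnj (x \<bullet>c W k))
      = (\<Sum>k<N. \<Sum>a<N. \<Sum>b<N. x$a * cnj (x$b) * (W k $ b * cnj (W k $ a)))"
    by (simp add: cscalar_prod_sum[OF x Wc] cnj_sum sum_product mult_ac)
  also have "\<dots> = (\<Sum>a<N. \<Sum>b<N. \<Sum>k<N. x$a * cnj (x$b) * (W k $ b * cnj (W k $ a)))"
    by (rule sum_swap3[symmetric])
  also have "\<dots> = (\<Sum>a<N. \<Sum>b<N. x$a * cnj (x$b) * (if b = a then 1 else 0))"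
    by (simp add: orthonormal_basis_complete[OF W] flip: sum_distrib_left)
  also have "\<dots> = (\<Sum>a<N. x$a * cnj (x$a))"
    by (simp add: if_distrib cong: if_cong)
  finally have "complex_of_real (\<Sum>k<N. (cmod (x \<bullet>c W k))^2) = complex_of_real (\<Sum>i<N. (cmod (x$i))^2)"
    by (simp add: complex_norm_square of_real_sum del: of_real_power)
  then show ?thesis by (rule of_real_eq_iff[THEN iffD1])
qed

lemma bessel_inequality:
  fixes y :: "nat \<Rightarrow> complex" and \<alpha> :: "nat \<Rightarrow> nat \<Rightarrow> complex" and p :: "nat \<Rightarrow> real"
  assumes orth: "\<And>l l'. l < n \<Longrightarrow> l' < n \<Longrightarrow>
      (\<Sum>a<m. \<alpha> l a * cnj (\<alpha> l' a)) = (if l = l' then complex_of_real (p l) else 0)"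
  shows "(\<Sum>l<n. if p l > 0 then (cmod (\<Sum>a<m. y a * cnj (\<alpha> l a)))^2 / p l else 0)
    \<le> (\<Sum>a<m. (cmod (y a))^2)"
proof -
  define s where "s l = (\<Sum>a<m. y a * cnj (\<alpha> l a))" for l
  define c where "c l = (if p l > 0 then s l / p l else 0)" for l
  define z where "z a = (\<Sum>l<n. c l * \<alpha> l a)" for a
  define Q where "Q = (\<Sum>l<n. if p l > 0 then (cmod (s l))^2 / p l else 0)"
  have cs: "cnj (c l) * s l = complex_of_real (if p l > 0 then (cmod (s l))^2 / p l else 0)" for l
    by (simp add: c_def complex_norm_square mult.commute del: of_real_power)
  have yz: "(\<Sum>a<m. y a * cnj (z a)) = complex_of_real Q"
  proof -
    have "(\<Sum>a<m. y a * cnj (z a)) = (\<Sum>a<m. \<Sum>l<n. cnj (c l) * (y a * cnj (\<alpha> l a)))"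
      unfolding z_def by (simp add: cnj_sum sum_distrib_left mult_ac)
    also have "\<dots> = (\<Sum>l<n. cnj (c l) * s l)"
      unfolding s_def by (subst sum.swap) (simp add: sum_distrib_left)
    finally show ?thesis unfolding cs Q_def of_real_sum .
  qed
  have zz: "(\<Sum>a<m. z a * cnj (z a)) = complex_of_real Q"
  proof -
    have "(\<Sum>a<m. z a * cnj (z a))
        = (\<Sum>a<m. \<Sum>l<n. \<Sum>l'<n. c l * cnj (c l') * (\<alpha> l a * cnj (\<alpha> l' a)))"
      unfolding z_def by (simp add: cnj_sum sum_product mult_ac)
    also have "\<dots> = (\<Sum>l<n. \<Sum>l'<n. c l * cnj (c l') * (\<Sum>a<m. \<alpha> l a * cnj (\<alpha> l' a)))"
      by (subst sum_swap3[symmetric]) (simp add: sum_distrib_left)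
    also have "\<dots> = (\<Sum>l<n. cnj (c l) * s l)"
      by (simp add: orth if_distrib cong: if_cong) (auto intro!: sum.cong simp: c_def mult_ac)
    finally show ?thesis unfolding cs Q_def of_real_sum .
  qed
  have "complex_of_real (\<Sum>a<m. (cmod (y a - z a))^2)
      = (\<Sum>a<m. y a * cnj (y a)) - (\<Sum>a<m. y a * cnj (z a)) - cnj (\<Sum>a<m. y a * cnj (z a))
        + (\<Sum>a<m. z a * cnj (z a))"
    by (simp add: complex_norm_square cnj_sum algebra_simps sum.distrib sum_subtractf mult.commute
        of_real_sum del: of_real_power)
  also have "\<dots> = complex_of_real ((\<Sum>a<m. (cmod (y a))^2) - Q)"
    unfolding yz zz by (simp add: complex_norm_square of_real_sum del: of_real_power)
  finally have "(\<Sum>a<m. (cmod (y a))^2) - Q = (\<Sum>a<m. (cmod (y a - z a))^2)"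
    by (metis of_real_eq_iff)
  moreover have "0 \<le> (\<Sum>a<m. (cmod (y a - z a))^2)" by (simp add: sum_nonneg)
  ultimately show ?thesis unfolding Q_def s_def by linarith
qed

section \<open>The spectral theorem for Hermitian matrices\<close>

lemma spectral_decomp_iff:
  "spectral_decomp N A p \<psi> \<longleftrightarrow> orthonormal_basis N \<psi> \<and>
     A = mat N N (\<lambda>(a,b). \<Sum>l<N. complex_of_real (p l) * (\<psi> l $ a * cnj (\<psi> l $ b)))"
proof -
  have "mat N N (\<lambda>(a,b). \<Sum>l<N. complex_of_real (p l) * (\<psi> l $ a * cnj (\<psi> l $ b)))
      = mat N N (\<lambda>(a,b). \<Sum>j<N. complex_of_real (p j) * (ketbra (\<psi> j) (\<psi> j)) $$ (a,b))"
    if "\<forall>j<N. \<psi> j \<in> carrier_vec N"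
    using that by (intro eq_matI) (auto intro!: sum.cong simp: ketbra_def carrier_vecD)
  then show ?thesis unfolding spectral_decomp_def orthonormal_basis_def by auto
qed

lemma spectral_decomp_eigenvector:
  assumes sd: "spectral_decomp N A p \<psi>" and j: "j < N"
  shows "A *\<^sub>v \<psi> j = complex_of_real (p j) \<cdot>\<^sub>v \<psi> j"
proof -
  have \<psi>: "orthonormal_basis N \<psi>"
    and A: "A = mat N N (\<lambda>(a,b). \<Sum>l<N. complex_of_real (p l) * (\<psi> l $ a * cnj (\<psi> l $ b)))"
    using sd unfolding spectral_decomp_iff by auto
  note \<psi>c = orthonormal_basis_carrier[OF \<psi>]
  show ?thesis
  proof (rule eq_vecI)
    fix a assume "a < dim_vec (complex_of_real (p j) \<cdot>\<^sub>v \<psi> j)"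
    then have a: "a < N" using \<psi>c[OF j] by simp
    have "A \<in> carrier_mat N N" by (subst A) simp
    then have "(A *\<^sub>v \<psi> j) $ a = (\<Sum>b<N. A $$ (a,b) * \<psi> j $ b)"
      using mult_mat_vec_sum \<psi>c[OF j] a by blast
    also have "\<dots> = (\<Sum>b<N. \<Sum>l<N. complex_of_real (p l) * \<psi> l $ a * (\<psi> j $ b * cnj (\<psi> l $ b)))"
      using a by (subst A) (simp add: sum_distrib_left mult_ac)
    also have "\<dots> = (\<Sum>l<N. complex_of_real (p l) * \<psi> l $ a * (if j = l then 1 else 0))"
      by (subst sum.swap) (simp add: orthonormal_basis_orthonormal[OF \<psi> j] flip: sum_distrib_left)
    finally show "(A *\<^sub>v \<psi> j) $ a = (complex_of_real (p j) \<cdot>\<^sub>v \<psi> j) $ a"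
      using a j \<psi>c[OF j] by (simp add: if_distrib cong: if_cong)
  qed (use \<psi>c[OF j] A in auto)
qed

lemma hermitian_unit_eigenvector:
  assumes herm: "hermitian_mat (Suc n) A"
  shows "\<exists>u e. u \<in> carrier_vec (Suc n) \<and> u \<bullet>c u = 1 \<and> A *\<^sub>v u = complex_of_real e \<cdot>\<^sub>v u"
proof -
  note A = hermitian_matD(1)[OF herm]
  obtain es where es: "char_poly A = (\<Prod>a\<leftarrow>es. [:- a, 1:])" "length es = Suc n"
    using char_poly_factorized[OF A] by blast
  then obtain e es' where "es = e # es'" by (cases es) auto
  then have "poly (char_poly A) e = 0" unfolding es(1) by simp
  then have "eigenvalue A e" using eigenvalue_root_char_poly[OF A] by simp
  then obtain v where v: "v \<in> carrier_vec (Suc n)" "v \<noteq> 0\<^sub>v (Suc n)" "A *\<^sub>v v = e \<cdot>\<^sub>v v"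
    unfolding eigenvalue_def eigenvector_def using A by auto
  define u where "u = complex_of_real (1 / sqrt (Re (v \<bullet>c v))) \<cdot>\<^sub>v v"
  have u: "u \<in> carrier_vec (Suc n)" unfolding u_def using v by simp
  have uu: "u \<bullet>c u = 1" unfolding u_def by (rule cscalar_prod_normalized[OF v(1,2)])
  have Au: "A *\<^sub>v u = e \<cdot>\<^sub>v u"
    unfolding u_def mult_mat_vec[OF A v(1)] v(3) using v(1) by (auto simp: smult_smult_assoc mult.commute)
  have "e = (A *\<^sub>v u) \<bullet>c u" using u uu by (simp add: Au cscalar_prod_smult_left)
  also have "\<dots> = u \<bullet>c (A *\<^sub>v u)" by (rule hermitian_cscalar_prod[OF herm u u])
  also have "\<dots> = cnj e" using u uu by (simp add: Au cscalar_prod_smult_right)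
  finally have "e = complex_of_real (Re e)" by (simp add: complex_eq_iff)
  then show ?thesis by (intro exI[of _ u] exI[of _ "Re e"] conjI u uu) (metis Au)
qed

lemma orthonormal_basis_extension:
  assumes u: "u \<in> carrier_vec (Suc n)" and uu: "u \<bullet>c u = 1"
  shows "\<exists>W. orthonormal_basis (Suc n) W \<and> W 0 = u"
proof -
  interpret cof_vec_space "Suc n" "TYPE(complex)" .
  have u0: "u \<noteq> 0\<^sub>v (Suc n)" using uu by auto
  define b where "b = basis_completion u"
  from basis_completion[OF u u0, folded b_def]
  have b: "distinct b" "\<not> lin_dep (set b)" "set b \<subseteq> carrier_vec (Suc n)" "length b = Suc n"
    and "hd b = u" by auto
  then obtain vs where bu: "b = u # vs" by (cases b) auto
  define ws where "ws = gram_schmidt (Suc n) b"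
  from gram_schmidt_result[OF b(3,1,2) ws_def]
  have orth: "corthogonal ws" and ws: "set ws \<subseteq> carrier_vec (Suc n)" "length ws = Suc n"
    using b(4) by auto
  have "hd ws = u" unfolding ws_def bu using u by simp
  then have ws0: "ws ! 0 = u" using ws(2) by (metis hd_conv_nth list.size(3) nat.distinct(1))
  have wsc: "ws ! j \<in> carrier_vec (Suc n)" if "j < Suc n" for j using ws that by auto
  define W where "W j = complex_of_real (1 / sqrt (Re (ws!j \<bullet>c ws!j))) \<cdot>\<^sub>v ws!j" for j
  have "orthonormal_basis (Suc n) W" unfolding orthonormal_basis_def
  proof (intro conjI allI impI)
    fix j k assume j: "j < Suc n" and k: "k < Suc n"
    show "W j \<in> carrier_vec (Suc n)" unfolding W_def using wsc[OF j] by simp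
    show "W j \<bullet>c W k = (if j = k then 1 else 0)"
    proof (cases "j = k")
      case True
      have "ws!j \<noteq> 0\<^sub>v (Suc n)" using corthogonalD[OF orth, of j j] j ws wsc[OF j] by auto
      then show ?thesis using True cscalar_prod_normalized[OF wsc[OF j]] unfolding W_def by simp
    next
      case False
      then have "ws!j \<bullet>c ws!k = 0" using corthogonalD[OF orth, of j k] j k ws by auto
      then show ?thesis using False unfolding W_def by (simp add: cscalar_prod_smult[OF wsc[OF j] wsc[OF k]])
    qed
  qed
  moreover have "W 0 = u" unfolding W_def ws0 uu by simp
  ultimately show ?thesis by blast
qed

lemma orthonormal_basis_vCons:
  assumes \<phi>: "orthonormal_basis n \<phi>"
  shows "orthonormal_basis (Suc n) (\<lambda>l. if l = 0 then unit_vec (Suc n) 0 else vCons 0 (\<phi> (l - 1)))"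
  (is "orthonormal_basis _ ?C")
proof -
  have C: "?C l = vCons (if l = 0 then 1 else 0) (if l = 0 then 0\<^sub>v n else \<phi> (l - 1))" for l
    by (auto simp: unit_vec_def vec_Suc o_def zero_vec_def)
  show ?thesis using \<phi> unfolding orthonormal_basis_def C
    by (auto simp: conjugate_vCons scalar_prod_vCons)
qed

definition vec_of_coords :: "nat \<Rightarrow> (nat \<Rightarrow> complex vec) \<Rightarrow> complex vec \<Rightarrow> complex vec" where
  "vec_of_coords N W c = vec N (\<lambda>a. \<Sum>i<N. c$i * W i $ a)"

lemma cscalar_prod_vec_of_coords:
  assumes W: "orthonormal_basis N W" and c: "c \<in> carrier_vec N" and d: "d \<in> carrier_vec N"
  shows "vec_of_coords N W c \<bullet>c vec_of_coords N W d = c \<bullet>c d"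
proof -
  have "vec_of_coords N W c \<bullet>c vec_of_coords N W d
      = (\<Sum>a<N. \<Sum>i<N. \<Sum>k<N. c$i * cnj (d$k) * (W i $ a * cnj (W k $ a)))"
    by (simp add: cscalar_prod_sum[of _ N] vec_of_coords_def cnj_sum sum_product mult_ac)
  also have "\<dots> = (\<Sum>i<N. \<Sum>k<N. c$i * cnj (d$k) * (if i = k then 1 else 0))"
    by (subst sum_swap3[symmetric])
      (simp add: orthonormal_basis_orthonormal[OF W] flip: sum_distrib_left)
  also have "\<dots> = c \<bullet>c d"
    using c d by (simp add: cscalar_prod_sum[of _ N] if_distrib cong: if_cong)
  finally show ?thesis .
qed

lemma orthonormal_basis_vec_of_coords:
  "orthonormal_basis N W \<Longrightarrow> orthonormal_basis N C \<Longrightarrow> orthonormal_basis N (\<lambda>l. vec_of_coords N W (C l))"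
  using cscalar_prod_vec_of_coords[of N W] unfolding orthonormal_basis_def
  by (auto simp: vec_of_coords_def)

lemma mat_entry_orthonormal_expansion:
  assumes W: "orthonormal_basis N W" and A: "A \<in> carrier_mat N N" and ab: "a < N" "b < N"
  shows "A$$(a,b) = (\<Sum>i<N. \<Sum>j<N. W i $ a * ((A *\<^sub>v W j) \<bullet>c W i) * cnj (W j $ b))"
proof -
  note Wc = orthonormal_basis_carrier[OF W]
  have "(\<Sum>i<N. \<Sum>j<N. W i $ a * ((A *\<^sub>v W j) \<bullet>c W i) * cnj (W j $ b))
      = (\<Sum>i<N. \<Sum>j<N. \<Sum>c<N. \<Sum>d<N. (W i $ a * cnj (W i $ c)) * A$$(c,d) * (W j $ d * cnj (W j $ b)))"
    using A Wc by (intro sum.cong refl)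
      (simp add: cscalar_prod_sum[of _ N] mult_mat_vec_sum sum_distrib_left sum_distrib_right mult_ac
        del: index_mult_mat_vec)
  also have "\<dots> = (\<Sum>c<N. \<Sum>d<N. (\<Sum>i<N. W i $ a * cnj (W i $ c)) * A$$(c,d) * (\<Sum>j<N. W j $ d * cnj (W j $ b)))"
    by (subst sum_swap4) (intro sum.cong refl, rule sum_mult_mult_sum[symmetric])
  also have "\<dots> = (\<Sum>c<N. \<Sum>d<N. if c = a then (if d = b then A$$(c,d) else 0) else 0)"
    by (intro sum.cong refl) (simp add: orthonormal_basis_complete[OF W] ab)
  also have "\<dots> = (\<Sum>c<N. if c = a then (\<Sum>d<N. if d = b then A$$(c,d) else 0) else 0)"
    by (intro sum.cong refl) auto
  also have "\<dots> = A$$(a,b)"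
    using ab by simp
  finally show ?thesis by simp
qed

lemma spectral_decomp_change_basis:
  assumes W: "orthonormal_basis N W" and A: "A \<in> carrier_mat N N" and C: "orthonormal_basis N C"
    and entries: "\<And>i j. i < N \<Longrightarrow> j < N \<Longrightarrow>
      (A *\<^sub>v W j) \<bullet>c W i = (\<Sum>l<N. complex_of_real (p l) * (C l $ i * cnj (C l $ j)))"
  shows "spectral_decomp N A p (\<lambda>l. vec_of_coords N W (C l))"
  unfolding spectral_decomp_iff
proof (intro conjI orthonormal_basis_vec_of_coords[OF W C] eq_matI)
  fix a b assume "a < dim_row (mat N N (\<lambda>(a,b). \<Sum>l<N. complex_of_real (p l) *
    (vec_of_coords N W (C l) $ a * cnj (vec_of_coords N W (C l) $ b))))"
    "b < dim_col (mat N N (\<lambda>(a,b). \<Sum>l<N. complex_of_real (p l) *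
    (vec_of_coords N W (C l) $ a * cnj (vec_of_coords N W (C l) $ b))))"
  then have ab: "a < N" "b < N" by auto
  have "A$$(a,b) = (\<Sum>i<N. \<Sum>j<N. W i $ a * (\<Sum>l<N. complex_of_real (p l) * (C l $ i * cnj (C l $ j))) * cnj (W j $ b))"
    using mat_entry_orthonormal_expansion[OF W A ab] by (simp add: entries)
  also have "\<dots> = (\<Sum>i<N. \<Sum>j<N. \<Sum>l<N. (C l $ i * W i $ a) * complex_of_real (p l) * cnj (C l $ j * W j $ b))"
    by (simp add: sum_distrib_left sum_distrib_right mult_ac)
  also have "\<dots> = (\<Sum>l<N. (\<Sum>i<N. C l $ i * W i $ a) * complex_of_real (p l) * (\<Sum>j<N. cnj (C l $ j * W j $ b)))"
    by (subst sum_swap3) (intro sum.cong refl, rule sum_mult_mult_sum[symmetric])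
  also have "\<dots> = (\<Sum>l<N. complex_of_real (p l) * (vec_of_coords N W (C l) $ a * cnj (vec_of_coords N W (C l) $ b)))"
    using ab by (simp add: vec_of_coords_def cnj_sum mult_ac)
  finally show "A$$(a,b) = mat N N (\<lambda>(a,b). \<Sum>l<N. complex_of_real (p l) *
    (vec_of_coords N W (C l) $ a * cnj (vec_of_coords N W (C l) $ b))) $$ (a,b)"
    using ab by simp
qed (use A in auto)

lemma hermitian_compression:
  assumes herm: "hermitian_mat (Suc n) A" and W: "orthonormal_basis (Suc n) W"
  shows "hermitian_mat n (mat n n (\<lambda>(i,j). (A *\<^sub>v W (Suc j)) \<bullet>c W (Suc i)))"
  unfolding hermitian_mat_def
proof (intro conjI allI impI)
  fix i j assume "i < n" "j < n"
  then have ci: "W (Suc i) \<in> carrier_vec (Suc n)" and cj: "W (Suc j) \<in> carrier_vec (Suc n)"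
    using orthonormal_basis_carrier[OF W] by auto
  have "cnj ((A *\<^sub>v W (Suc i)) \<bullet>c W (Suc j)) = W (Suc j) \<bullet>c (A *\<^sub>v W (Suc i))"
    using hermitian_matD(1)[OF herm] ci cj by (intro cnj_cscalar_prod) auto
  also have "\<dots> = (A *\<^sub>v W (Suc j)) \<bullet>c W (Suc i)"
    by (rule hermitian_cscalar_prod[OF herm cj ci, symmetric])
  finally show "mat n n (\<lambda>(i,j). (A *\<^sub>v W (Suc j)) \<bullet>c W (Suc i)) $$ (i,j)
      = cnj (mat n n (\<lambda>(i,j). (A *\<^sub>v W (Suc j)) \<bullet>c W (Suc i)) $$ (j,i))"
    using \<open>i < n\<close> \<open>j < n\<close> by simp
qed simp

lemma eigenvector_first_basis_entries:
  assumes herm: "hermitian_mat N A" and W: "orthonormal_basis N W" and N: "0 < N"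
    and AW0: "A *\<^sub>v W 0 = e \<cdot>\<^sub>v W 0" and ij: "i < N" "j < N" "i = 0 \<or> j = 0"
  shows "(A *\<^sub>v W j) \<bullet>c W i = (if i = j then e else 0)"
proof -
  note Wc = orthonormal_basis_carrier[OF W]
  have "(A *\<^sub>v W j) \<bullet>c W i = W j \<bullet>c (A *\<^sub>v W i)" if "i = 0"
    by (rule hermitian_cscalar_prod[OF herm Wc[OF ij(2)] Wc[OF ij(1)]])
  then show ?thesis using W ij N unfolding orthonormal_basis_def
    by (auto simp: AW0 cscalar_prod_smult_left[OF Wc Wc] cscalar_prod_smult_right[OF Wc Wc])
qed

theorem hermitian_spectral_decomp:
  "hermitian_mat N A \<Longrightarrow> \<exists>p \<psi>. spectral_decomp N A p \<psi>"
proof (induction N arbitrary: A)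
  case 0
  then have "A \<in> carrier_mat 0 0" by (rule hermitian_matD)
  then have "spectral_decomp 0 A (\<lambda>_. 0) (\<lambda>_. 0\<^sub>v 0)"
    unfolding spectral_decomp_iff orthonormal_basis_def by auto
  then show ?case by blast
next
  case (Suc n)
  note herm = Suc.prems and A = hermitian_matD(1)[OF Suc.prems]
  obtain u e where u: "u \<in> carrier_vec (Suc n)" "u \<bullet>c u = 1"
    and Au: "A *\<^sub>v u = complex_of_real e \<cdot>\<^sub>v u"
    using hermitian_unit_eigenvector[OF herm] by blast
  obtain W where W: "orthonormal_basis (Suc n) W" and W0: "W 0 = u"
    using orthonormal_basis_extension[OF u] by blast
  have AW0: "A *\<^sub>v W 0 = complex_of_real e \<cdot>\<^sub>v W 0" using Au W0 by simp
  define A' where "A' = mat n n (\<lambda>(i,j). (A *\<^sub>v W (Suc j)) \<bullet>c W (Suc i))"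
  have "hermitian_mat n A'" unfolding A'_def by (rule hermitian_compression[OF herm W])
  then obtain q \<phi> where \<phi>: "orthonormal_basis n \<phi>"
    and A': "A' = mat n n (\<lambda>(a,b). \<Sum>l<n. complex_of_real (q l) * (\<phi> l $ a * cnj (\<phi> l $ b)))"
    using Suc.IH unfolding spectral_decomp_iff by blast
  define C where "C l = (if l = 0 then unit_vec (Suc n) 0 else vCons 0 (\<phi> (l - 1)))" for l
  define p where "p l = (if l = 0 then e else q (l - 1))" for l
  (* W 0 is an eigenvector, so in the basis W the matrix of A is block diagonal with blocks e and A'. *)
  define E where "E i j = (if i = 0 \<and> j = 0 then complex_of_real e
    else if i = 0 \<or> j = 0 then 0 else A' $$ (i - 1, j - 1))" for i j
  have "(A *\<^sub>v W j) \<bullet>c W i = (\<Sum>l<Suc n. complex_of_real (p l) * (C l $ i * cnj (C l $ j)))"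
    if i: "i < Suc n" and j: "j < Suc n" for i j
  proof -
    have "(A *\<^sub>v W j) \<bullet>c W i = E i j"
      using eigenvector_first_basis_entries[OF herm W _ AW0 i j] i j unfolding E_def A'_def
      by (cases "i = 0 \<or> j = 0") auto
    also have "\<dots> = (\<Sum>l<Suc n. complex_of_real (p l) * (C l $ i * cnj (C l $ j)))"
      unfolding sum.lessThan_Suc_shift using i j by (simp add: E_def C_def p_def A' vec_index_vCons)
    finally show ?thesis .
  qed
  from spectral_decomp_change_basis[OF W A orthonormal_basis_vCons[OF \<phi>, folded C_def] this]
  show ?case by blast
qed

section \<open>Fisher information of a spectral decomposition\<close>

lemma density_mat_eigenvalues:
  assumes d: "density_mat N \<rho>" and sd: "spectral_decomp N \<rho> p \<psi>"
  shows "\<And>j. j < N \<Longrightarrow> p j \<ge> 0" and "(\<Sum>j<N. p j) = 1"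
proof -
  have \<psi>: "orthonormal_basis N \<psi>"
    and \<rho>: "\<rho> = mat N N (\<lambda>(a,b). \<Sum>l<N. complex_of_real (p l) * (\<psi> l $ a * cnj (\<psi> l $ b)))"
    using sd unfolding spectral_decomp_iff by auto
  note \<psi>c = orthonormal_basis_carrier[OF \<psi>]
  show "p j \<ge> 0" if j: "j < N" for j
  proof -
    have "(\<rho> *\<^sub>v \<psi> j) \<bullet>c \<psi> j = complex_of_real (p j)"
      using \<psi> j by (simp add: spectral_decomp_eigenvector[OF sd j] cscalar_prod_smult_left[OF \<psi>c \<psi>c]
          orthonormal_basis_def)
    moreover have "0 \<le> Re ((\<rho> *\<^sub>v \<psi> j) \<bullet>c \<psi> j)" using d \<psi>c[OF j] unfolding density_mat_def by auto
    ultimately show ?thesis by simp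
  qed
  have "1 = mat_trace \<rho>" using d unfolding density_mat_def by auto
  also have "\<dots> = (\<Sum>a<N. \<Sum>l<N. complex_of_real (p l) * (\<psi> l $ a * cnj (\<psi> l $ a)))"
    unfolding mat_trace_def using \<rho> by simp
  also have "\<dots> = (\<Sum>l<N. complex_of_real (p l) * (\<Sum>a<N. \<psi> l $ a * cnj (\<psi> l $ a)))"
    by (subst sum.swap) (simp add: sum_distrib_left)
  also have "\<dots> = complex_of_real (\<Sum>l<N. p l)"
    by (simp add: orthonormal_basis_orthonormal[OF \<psi>])
  finally show "(\<Sum>j<N. p j) = 1" by (metis of_real_eq_1_iff)
qed

definition fisher_sum :: "nat \<Rightarrow> (nat \<Rightarrow> real) \<Rightarrow> (nat \<Rightarrow> nat \<Rightarrow> complex) \<Rightarrow> real" where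
  "fisher_sum N p h = 2 * (\<Sum>j<N. \<Sum>k<N. if p j + p k > 0 then
     (p j - p k)^2 / (p j + p k) * (cmod (h j k))^2 else 0)"

lemma QFI_eq_fisher_sum:
  assumes "hermitian_mat N \<rho>"
  shows "\<exists>p \<psi>. spectral_decomp N \<rho> p \<psi> \<and> QFI N \<rho> H = fisher_sum N p (\<lambda>j k. braket (\<psi> j) H (\<psi> k))"
proof -
  define x where "x = (SOME (p, \<psi>). spectral_decomp N \<rho> p \<psi>)"
  obtain p \<psi> where x: "x = (p, \<psi>)" by (cases x)
  have "\<exists>x. (\<lambda>(p,\<psi>). spectral_decomp N \<rho> p \<psi>) x"
    using hermitian_spectral_decomp[OF assms] by auto
  then have "spectral_decomp N \<rho> p \<psi>"
    using someI_ex[of "\<lambda>(p,\<psi>). spectral_decomp N \<rho> p \<psi>"] unfolding x_def[symmetric] x by auto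
  moreover have "QFI N \<rho> H = fisher_sum N p (\<lambda>j k. braket (\<psi> j) H (\<psi> k))"
    unfolding QFI_def fisher_sum_def x_def[symmetric] x by simp
  ultimately show ?thesis by blast
qed

lemma fisher_sum_pure:
  assumes j0: "j0 < N" and p: "\<And>j. j < N \<Longrightarrow> p j = (if j = j0 then 1 else 0)"
    and h: "\<And>j k. j < N \<Longrightarrow> k < N \<Longrightarrow> cmod (h j k) = cmod (h k j)"
  shows "fisher_sum N p h = 4 * ((\<Sum>k<N. (cmod (h k j0))^2) - (cmod (h j0 j0))^2)"
proof -
  define c where "c k = (cmod (h k j0))^2" for k
  define D where "D = (\<Sum>k<N. c k) - c j0"
  have "fisher_sum N p h = 2 * (\<Sum>j<N. \<Sum>k<N. if j = j0 then (if k = j0 then 0 else c k) else (if k = j0 then c j else 0))"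
    unfolding fisher_sum_def using j0 by (intro arg_cong[where f = "(*) 2"] sum.cong refl) (auto simp: p c_def h)
  also have "\<dots> = 2 * (\<Sum>j<N. if j = j0 then D else c j)"
    using sum_if_eq_replace[of "{..<N}" j0 0 c] j0 unfolding D_def by (auto intro!: sum.cong)
  also have "\<dots> = 4 * D" using sum_if_eq_replace[of "{..<N}" j0 D c] j0 unfolding D_def by simp
  finally show ?thesis unfolding D_def c_def .
qed

lemma norm_diff_sq_le_weighted:
  fixes u v :: complex and a b :: real
  assumes a: "a > 0" and b: "b > 0"
  shows "(cmod (u - v))^2 \<le> (a + b) * ((cmod u)^2 / a + (cmod v)^2 / b)"
proof -
  have "a * b * (cmod (u - v))^2 + (cmod (b * u + a * v))^2 = (a + b) * (b * (cmod u)^2 + a * (cmod v)^2)"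
    unfolding cmod_power2 by (simp add: power2_eq_square algebra_simps)
  then have "a * b * (cmod (u - v))^2 \<le> (a + b) * (b * (cmod u)^2 + a * (cmod v)^2)"
    using zero_le_power2[of "cmod (b * u + a * v)"] by linarith
  moreover have "(a + b) * ((cmod u)^2 / a + (cmod v)^2 / b) = (a + b) * (b * (cmod u)^2 + a * (cmod v)^2) / (a * b)"
    using a b by (simp add: field_simps)
  ultimately show ?thesis using a b by (simp add: pos_le_divide_eq mult.commute)
qed

text \<open>(a - b) x is the difference of x a + y and x b + y.\<close>

lemma fisher_term_le:
  fixes x y :: complex and a b :: real
  assumes "a \<ge> 0" "b \<ge> 0" and "a = 0 \<or> b = 0 \<Longrightarrow> y = 0"
  shows "(if a + b > 0 then (a - b)^2 / (a + b) * (cmod x)^2 else 0)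
    \<le> (if b > 0 then (cmod (x * b + y))^2 / b else 0) + (if a > 0 then (cmod (cnj x * a + cnj y))^2 / a else 0)"
proof -
  have cnj: "cmod (cnj x * a + cnj y) = cmod (x * a + y)"
    by (metis complex_cnj_add complex_cnj_complex_of_real complex_cnj_mult complex_mod_cnj)
  consider "a > 0" "b > 0" | "a = 0" "y = 0" | "b = 0" "y = 0"
    using assms by force
  then show ?thesis
  proof cases
    case 1
    have "(x * a + y) - (x * b + y) = x * complex_of_real (a - b)" by (simp add: algebra_simps)
    moreover have "cmod (x * complex_of_real (a - b)) = cmod x * \<bar>a - b\<bar>"
      by (simp only: norm_mult norm_of_real)
    ultimately have "(a - b)^2 * (cmod x)^2 = (cmod ((x * a + y) - (x * b + y)))^2"
      by (simp add: power_mult_distrib)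
    also have "\<dots> \<le> (a + b) * ((cmod (x * a + y))^2 / a + (cmod (x * b + y))^2 / b)"
      by (rule norm_diff_sq_le_weighted[OF 1])
    finally show ?thesis using 1 cnj by (simp add: field_simps)
  qed (auto simp: cnj norm_mult power_mult_distrib power2_eq_square field_simps)
qed

lemma sum_cnj_eq_0_imp_zero:
  fixes x :: "nat \<Rightarrow> complex"
  assumes "(\<Sum>a<m. x a * cnj (x a)) = 0" and "a < m"
  shows "x a = 0"
proof -
  have "complex_of_real (\<Sum>a<m. (cmod (x a))^2) = 0"
    using assms(1) by (simp add: complex_norm_square of_real_sum del: of_real_power)
  then have "(\<Sum>a<m. (cmod (x a))^2) = 0" by (metis of_real_eq_0_iff)
  then have "\<forall>a\<in>{..<m}. (cmod (x a))^2 = 0" by (simp add: sum_nonneg_eq_0_iff)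
  then show ?thesis using assms(2) by simp
qed

lemma hermitian_form_cnj:
  fixes G :: "nat \<Rightarrow> nat \<Rightarrow> complex"
  assumes G: "\<And>a a'. a < m \<Longrightarrow> a' < m \<Longrightarrow> G a' a = cnj (G a a')"
  shows "(\<Sum>a<m. (\<Sum>a'<m. G a a' * x a') * cnj (y a)) = cnj (\<Sum>a<m. (\<Sum>a'<m. G a a' * y a') * cnj (x a))"
proof -
  have "cnj (\<Sum>a<m. (\<Sum>a'<m. G a a' * y a') * cnj (x a)) = (\<Sum>a<m. \<Sum>a'<m. G a' a * cnj (y a') * x a)"
    unfolding cnj_sum by (intro sum.cong refl) (simp add: sum_distrib_right cnj_sum G[symmetric])
  also have "\<dots> = (\<Sum>a<m. (\<Sum>a'<m. G a a' * x a') * cnj (y a))"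
    by (subst sum.swap) (simp add: sum_distrib_left sum_distrib_right mult_ac)
  finally show ?thesis by simp
qed

theorem fisher_sum_le_local_norm:
  fixes h \<alpha> G :: "nat \<Rightarrow> nat \<Rightarrow> complex" and p :: "nat \<Rightarrow> real"
  assumes p: "\<And>l. l < n \<Longrightarrow> p l \<ge> 0"
    and \<alpha>: "\<And>j k. j < n \<Longrightarrow> k < n \<Longrightarrow>
      (\<Sum>a<m. \<alpha> j a * cnj (\<alpha> k a)) = (if j = k then complex_of_real (p j) else 0)"
    and h: "\<And>j k. j < n \<Longrightarrow> k < n \<Longrightarrow> h k j = cnj (h j k)"
    and G: "\<And>a a'. a < m \<Longrightarrow> a' < m \<Longrightarrow> G a' a = cnj (G a a')"
  shows "fisher_sum n p h
    \<le> 4 * (\<Sum>k<n. \<Sum>a<m. (cmod ((\<Sum>j<n. h k j * \<alpha> j a) + (\<Sum>a'<m. G a a' * \<alpha> k a')))^2)"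
proof -
  define B where "B k a = (\<Sum>j<n. h k j * \<alpha> j a) + (\<Sum>a'<m. G a a' * \<alpha> k a')" for k a
  define g where "g l k = (\<Sum>a<m. (\<Sum>a'<m. G a a' * \<alpha> k a') * cnj (\<alpha> l a))" for l k
  define T where "T k l = (if p l > 0 then (cmod (h k l * p l + g l k))^2 / p l else 0)" for k l
  have \<alpha>0: "\<alpha> j a = 0" if "j < n" "p j = 0" "a < m" for j a
    using sum_cnj_eq_0_imp_zero[where m = m and x = "\<alpha> j"] \<alpha>[of j j] that by simp
  have B\<alpha>: "(\<Sum>a<m. B k a * cnj (\<alpha> l a)) = h k l * p l + g l k" if "k < n" "l < n" for k l
  proof -
    have "(\<Sum>a<m. (\<Sum>j<n. h k j * \<alpha> j a) * cnj (\<alpha> l a)) = (\<Sum>j<n. h k j * (\<Sum>a<m. \<alpha> j a * cnj (\<alpha> l a)))"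
      by (simp add: sum_distrib_left sum_distrib_right mult.assoc sum.swap[of _ "{..<m}"])
    also have "\<dots> = h k l * p l" using that by (simp add: \<alpha> if_distrib cong: if_cong)
    finally show ?thesis unfolding B_def g_def by (simp add: distrib_right sum.distrib)
  qed
  have g_cnj: "g k l = cnj (g l k)" for k l
    unfolding g_def by (rule hermitian_form_cnj[OF G])
  have g0: "g l k = 0" if "l < n" "k < n" "p k = 0 \<or> p l = 0" for l k
    using that \<alpha>0 unfolding g_def by auto
  have bessel: "(\<Sum>l<n. T k l) \<le> (\<Sum>a<m. (cmod (B k a))^2)" if "k < n" for k
    using bessel_inequality[OF \<alpha>, where y = "B k"] that unfolding T_def by (simp add: B\<alpha> cong: if_cong)
  have pair: "(if p k + p l > 0 then (p k - p l)^2 / (p k + p l) * (cmod (h k l))^2 else 0) \<le> T k l + T l k"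
    if "k < n" "l < n" for k l
    using fisher_term_le[of "p k" "p l" "g l k" "h k l"] p that g0 h[of k l] g_cnj[of k l]
    unfolding T_def by auto
  have "fisher_sum n p h \<le> 2 * (\<Sum>k<n. \<Sum>l<n. T k l + T l k)"
    unfolding fisher_sum_def by (intro mult_left_mono sum_mono pair) auto
  also have "\<dots> = 4 * (\<Sum>k<n. \<Sum>l<n. T k l)"
    by (simp add: sum.distrib sum.swap[of "\<lambda>k l. T l k"])
  also have "\<dots> \<le> 4 * (\<Sum>k<n. \<Sum>a<m. (cmod (B k a))^2)"
    by (intro mult_left_mono sum_mono bessel) auto
  finally show ?thesis unfolding B_def .
qed

lemma sqrt_weight_identity:
  fixes s t :: real
  assumes "s^2 + t^2 > 0"
  shows "(s - 2 * s * t / (s^2 + t^2) * t)^2 + (t - 2 * s * t / (s^2 + t^2) * s)^2 = (s^2 - t^2)^2 / (s^2 + t^2)"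
proof -
  define D where "D = s^2 + t^2"
  have D: "D > 0" using assms unfolding D_def .
  have "s - 2 * s * t / D * t = s * (s^2 - t^2) / D" "t - 2 * s * t / D * s = t * (t^2 - s^2) / D"
    using D by (simp_all add: field_simps) (simp_all add: D_def power2_eq_square algebra_simps)
  moreover have "(s * (s^2 - t^2) / D)^2 + (t * (t^2 - s^2) / D)^2 = (s^2 - t^2)^2 / D"
    using D by (simp add: power_divide field_simps) (simp add: D_def power2_eq_square algebra_simps)
  ultimately show ?thesis unfolding D_def by simp
qed

lemma fisher_sum_eq_optimal_local_norm:
  fixes h :: "nat \<Rightarrow> nat \<Rightarrow> complex"
  assumes p: "\<And>l. l < n \<Longrightarrow> p l \<ge> 0" and h: "\<And>j k. j < n \<Longrightarrow> k < n \<Longrightarrow> cmod (h k j) = cmod (h j k)"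
  defines "c a k \<equiv> 2 * sqrt (p a) * sqrt (p k) / (p a + p k)"
  shows "4 * (\<Sum>k<n. \<Sum>a<n. (cmod (h k a))^2 * (sqrt (p a) - c a k * sqrt (p k))^2) = fisher_sum n p h"
proof -
  define U where "U k a = (cmod (h k a))^2 * (sqrt (p a) - c a k * sqrt (p k))^2" for k a
  have "U k a + U a k = (if p k + p a > 0 then (p k - p a)^2 / (p k + p a) * (cmod (h k a))^2 else 0)"
    if k: "k < n" and a: "a < n" for k a
  proof (cases "p k + p a > 0")
    case True
    have "(sqrt (p a) - c a k * sqrt (p k))^2 + (sqrt (p k) - c k a * sqrt (p a))^2 = (p a - p k)^2 / (p a + p k)"
      using sqrt_weight_identity[of "sqrt (p a)" "sqrt (p k)"] True p[OF k] p[OF a]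
      by (simp add: c_def add.commute mult_ac)
    then show ?thesis
      using True h[OF k a] unfolding U_def by (simp add: power2_commute add.commute algebra_simps flip: distrib_left)
  next
    case False
    then have "p k = 0" "p a = 0" using p[OF k] p[OF a] by auto
    then show ?thesis using False unfolding U_def c_def by simp
  qed
  then have "fisher_sum n p h = 2 * (\<Sum>k<n. \<Sum>a<n. U k a + U a k)"
    unfolding fisher_sum_def by simp
  also have "\<dots> = 4 * (\<Sum>k<n. \<Sum>a<n. U k a)"
    by (simp add: sum.distrib sum.swap[of "\<lambda>k a. U a k"])
  finally show ?thesis unfolding U_def by simp
qed

section \<open>Variance and pure states\<close>

lemma variance_eq_norm:
  assumes H: "hermitian_mat N H" and \<Phi>: "\<Phi> \<in> carrier_vec N"
  shows "variance H \<Phi> = (\<Sum>x<N. (cmod ((H *\<^sub>v \<Phi>) $ x))^2) - (Re (braket \<Phi> H \<Phi>))^2"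
proof -
  note Hc = hermitian_matD(1)[OF H]
  have "braket \<Phi> (H * H) \<Phi> = (H *\<^sub>v (H *\<^sub>v \<Phi>)) \<bullet>c \<Phi>"
    unfolding braket_def using Hc \<Phi> by simp
  also have "\<dots> = (H *\<^sub>v \<Phi>) \<bullet>c (H *\<^sub>v \<Phi>)" using Hc \<Phi> by (simp add: hermitian_cscalar_prod[OF H])
  also have "\<dots> = complex_of_real (\<Sum>x<N. (cmod ((H *\<^sub>v \<Phi>) $ x))^2)"
    using Hc \<Phi> by (simp add: cscalar_prod_self[of _ N])
  finally show ?thesis unfolding variance_def by simp
qed

lemma variance_eq_norm_centered:
  assumes H: "hermitian_mat N H" and \<Phi>: "\<Phi> \<in> carrier_vec N" and unit: "\<Phi> \<bullet>c \<Phi> = 1"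
  shows "variance H \<Phi> = (\<Sum>x<N. (cmod ((H *\<^sub>v \<Phi>) $ x - complex_of_real (Re (braket \<Phi> H \<Phi>)) * \<Phi> $ x))^2)"
proof -
  define l where "l = Re (braket \<Phi> H \<Phi>)"
  define w where "w = H *\<^sub>v \<Phi>"
  have w: "w \<in> carrier_vec N" unfolding w_def using hermitian_matD(1)[OF H] \<Phi> by simp
  have expand: "(cmod (z - complex_of_real l * y))^2 = (cmod z)^2 - 2 * l * Re (z * cnj y) + l^2 * (cmod y)^2"
    for z y unfolding cmod_power2 by (simp add: power2_eq_square algebra_simps)
  have re: "(\<Sum>x<N. Re (w $ x * cnj (\<Phi> $ x))) = l"
    unfolding l_def w_def braket_def using cscalar_prod_sum[OF w[unfolded w_def] \<Phi>] by (simp add: Re_sum)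
  have norm: "(\<Sum>x<N. (cmod (\<Phi> $ x))^2) = 1" using cscalar_prod_self[OF \<Phi>] unit by (metis of_real_eq_1_iff)
  have "(\<Sum>x<N. (cmod (w $ x - complex_of_real l * \<Phi> $ x))^2)
      = (\<Sum>x<N. (cmod (w $ x))^2) - 2 * l * (\<Sum>x<N. Re (w $ x * cnj (\<Phi> $ x))) + l^2 * (\<Sum>x<N. (cmod (\<Phi> $ x))^2)"
    by (simp only: expand sum.distrib sum_subtractf sum_distrib_left)
  also have "\<dots> = (\<Sum>x<N. (cmod (w $ x))^2) - l^2"
    unfolding re norm by (simp add: power2_eq_square)
  finally show ?thesis unfolding variance_eq_norm[OF H \<Phi>] l_def w_def by simp
qed

lemma ketbra_mult_vec:
  assumes "\<Phi> \<in> carrier_vec N" "x \<in> carrier_vec N"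
  shows "ketbra \<Phi> \<Phi> *\<^sub>v x = (x \<bullet>c \<Phi>) \<cdot>\<^sub>v \<Phi>"
  using assms by (intro eq_vecI)
    (auto simp: ketbra_def mult_mat_vec_sum[of _ N N] cscalar_prod_sum[of _ N] sum_distrib_left mult_ac
      simp del: index_mult_mat_vec)

lemma hermitian_ketbra: "\<Phi> \<in> carrier_vec N \<Longrightarrow> hermitian_mat N (ketbra \<Phi> \<Phi>)"
  unfolding hermitian_mat_def ketbra_def by auto

lemma spectral_decomp_ketbra_eigenvalue:
  assumes \<Phi>: "\<Phi> \<in> carrier_vec N" and unit: "\<Phi> \<bullet>c \<Phi> = 1"
    and sd: "spectral_decomp N (ketbra \<Phi> \<Phi>) p \<psi>" and k: "k < N"
  shows "(\<psi> k \<bullet>c \<Phi>) \<cdot>\<^sub>v \<Phi> = complex_of_real (p k) \<cdot>\<^sub>v \<psi> k"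
    and "p k = (cmod (\<psi> k \<bullet>c \<Phi>))^2"
    and "p k = (if \<psi> k \<bullet>c \<Phi> = 0 then 0 else 1)"
proof -
  have \<psi>: "orthonormal_basis N \<psi>" using sd unfolding spectral_decomp_iff by auto
  note \<psi>c = orthonormal_basis_carrier[OF \<psi>]
  define t where "t = \<psi> k \<bullet>c \<Phi>"
  show eig: "t \<cdot>\<^sub>v \<Phi> = complex_of_real (p k) \<cdot>\<^sub>v \<psi> k"
    using spectral_decomp_eigenvector[OF sd k] ketbra_mult_vec[OF \<Phi> \<psi>c[OF k]] unfolding t_def by simp
  have "complex_of_real (p k) = (complex_of_real (p k) \<cdot>\<^sub>v \<psi> k) \<bullet>c \<psi> k"
    using \<psi> k by (simp add: cscalar_prod_smult_left[OF \<psi>c \<psi>c] orthonormal_basis_def)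
  also have "\<dots> = t * cnj t"
    unfolding eig[symmetric] cscalar_prod_smult_left[OF \<Phi> \<psi>c[OF k]] t_def
    using cnj_cscalar_prod[OF \<psi>c[OF k] \<Phi>] by simp
  finally have pt: "complex_of_real (p k) = t * cnj t" .
  then show "p k = (cmod t)^2" by (metis complex_norm_square of_real_eq_iff)
  have "t = (t \<cdot>\<^sub>v \<Phi>) \<bullet>c \<Phi>" using unit by (simp add: cscalar_prod_smult_left[OF \<Phi> \<Phi>])
  also have "\<dots> = complex_of_real (p k) * t"
    by (subst eig) (simp add: t_def cscalar_prod_smult_left[OF \<psi>c[OF k] \<Phi>])
  finally show "p k = (if t = 0 then 0 else 1)"
    using pt by (auto simp flip: of_real_eq_1_iff)
qed

lemma spectral_decomp_ketbra:
  assumes \<Phi>: "\<Phi> \<in> carrier_vec N" and unit: "\<Phi> \<bullet>c \<Phi> = 1"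
    and sd: "spectral_decomp N (ketbra \<Phi> \<Phi>) p \<psi>"
  obtains j0 t where "j0 < N" "\<And>j. j < N \<Longrightarrow> p j = (if j = j0 then 1 else 0)"
    "\<psi> j0 = t \<cdot>\<^sub>v \<Phi>" "cmod t = 1"
proof -
  have \<psi>: "orthonormal_basis N \<psi>" using sd unfolding spectral_decomp_iff by auto
  note \<psi>c = orthonormal_basis_carrier[OF \<psi>]
  note eigenvalue = spectral_decomp_ketbra_eigenvalue[OF \<Phi> unit sd]
  have "(\<Sum>k<N. p k) = (\<Sum>k<N. (cmod (\<Phi> \<bullet>c \<psi> k))^2)"
    using eigenvalue(2) cnj_cscalar_prod[OF \<psi>c \<Phi>] by (metis (no_types, lifting) complex_mod_cnj lessThan_iff sum.cong)
  also have "\<dots> = 1" using orthonormal_basis_parseval[OF \<psi> \<Phi>] cscalar_prod_self[OF \<Phi>] unit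
    by (metis of_real_eq_1_iff)
  finally have "card {k \<in> {..<N}. \<psi> k \<bullet>c \<Phi> \<noteq> 0} = 1"
    using eigenvalue(3) by (simp add: sum.If_cases Int_def)
  then obtain j0 where j0: "{k \<in> {..<N}. \<psi> k \<bullet>c \<Phi> \<noteq> 0} = {j0}" by (rule card_1_singletonE)
  then have "j0 < N" and p: "\<And>j. j < N \<Longrightarrow> p j = (if j = j0 then 1 else 0)" using eigenvalue(3) by auto
  moreover have "\<psi> j0 = (\<psi> j0 \<bullet>c \<Phi>) \<cdot>\<^sub>v \<Phi>" using eigenvalue(1)[OF \<open>j0 < N\<close>] p[OF \<open>j0 < N\<close>] by simp
  moreover have "(cmod (\<psi> j0 \<bullet>c \<Phi>))^2 = 1" using eigenvalue(2)[OF \<open>j0 < N\<close>] p[OF \<open>j0 < N\<close>] by simp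
  then have "cmod (\<psi> j0 \<bullet>c \<Phi>) = 1" by (smt (verit) norm_ge_zero power2_eq_1_iff)
  ultimately show ?thesis using that by blast
qed

theorem QFI_pure:
  assumes H: "hermitian_mat N H" and \<Phi>: "\<Phi> \<in> carrier_vec N" and unit: "\<Phi> \<bullet>c \<Phi> = 1"
  shows "QFI N (ketbra \<Phi> \<Phi>) H = 4 * variance H \<Phi>"
proof -
  note Hc = hermitian_matD(1)[OF H]
  obtain p \<psi> where sd: "spectral_decomp N (ketbra \<Phi> \<Phi>) p \<psi>"
    and QFI: "QFI N (ketbra \<Phi> \<Phi>) H = fisher_sum N p (\<lambda>j k. braket (\<psi> j) H (\<psi> k))"
    using QFI_eq_fisher_sum[OF hermitian_ketbra[OF \<Phi>]] by blast
  have \<psi>: "orthonormal_basis N \<psi>" using sd unfolding spectral_decomp_iff by auto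
  note \<psi>c = orthonormal_basis_carrier[OF \<psi>]
  obtain j0 t where j0: "j0 < N" and p: "\<And>j. j < N \<Longrightarrow> p j = (if j = j0 then 1 else 0)"
    and \<psi>j0: "\<psi> j0 = t \<cdot>\<^sub>v \<Phi>" and t: "cmod t = 1"
    using spectral_decomp_ketbra[OF \<Phi> unit sd] by blast
  have H\<psi>j0: "H *\<^sub>v \<psi> j0 = t \<cdot>\<^sub>v (H *\<^sub>v \<Phi>)" unfolding \<psi>j0 by (rule mult_mat_vec[OF Hc \<Phi>])
  have "(\<Sum>k<N. (cmod (braket (\<psi> k) H (\<psi> j0)))^2) = (\<Sum>x<N. (cmod ((H *\<^sub>v \<Phi>) $ x))^2)"
    unfolding braket_def orthonormal_basis_parseval[OF \<psi> mult_mat_vec_carrier[OF Hc \<psi>c[OF j0]]]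
    using Hc \<Phi> by (simp add: H\<psi>j0 norm_mult t)
  moreover have "braket (\<psi> j0) H (\<psi> j0) = braket \<Phi> H \<Phi>"
  proof -
    have "t * cnj t = 1" using complex_norm_square[of t] t by simp
    then show ?thesis using Hc \<Phi> unfolding braket_def H\<psi>j0 \<psi>j0[symmetric]
      by (simp add: \<psi>j0 cscalar_prod_smult_right[of _ N] mult.assoc[symmetric] mult.commute[of "cnj t"])
  qed
  moreover have "braket \<Phi> H \<Phi> = complex_of_real (Re (braket \<Phi> H \<Phi>))"
    using braket_hermitian[OF H \<Phi> \<Phi>] by (simp add: complex_eq_iff)
  ultimately have "fisher_sum N p (\<lambda>j k. braket (\<psi> j) H (\<psi> k))
      = 4 * ((\<Sum>x<N. (cmod ((H *\<^sub>v \<Phi>) $ x))^2) - (Re (braket \<Phi> H \<Phi>))^2)"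
    using fisher_sum_pure[OF j0 p, of "\<lambda>j k. braket (\<psi> j) H (\<psi> k)"] braket_hermitian[OF H \<psi>c \<psi>c]
    by (metis (no_types, lifting) complex_mod_cnj norm_of_real power2_abs)
  then show ?thesis unfolding QFI variance_eq_norm[OF H \<Phi>] .
qed

section \<open>Bipartite systems\<close>

lemma tensor_index_less:
  assumes "i < n" "a < m"
  shows "i*m + a < n*(m::nat)"
proof -
  have "i*m + a < Suc i * m" using assms by simp
  also have "\<dots> \<le> n * m" using assms by (intro mult_le_mono1) simp
  finally show ?thesis .
qed

lemma hermitian_mat_add:
  assumes A: "hermitian_mat N A" and B: "hermitian_mat N B"
  shows "hermitian_mat N (A + B)"
  unfolding hermitian_mat_def
proof (intro conjI allI impI)
  note Ac = hermitian_matD(1)[OF A] and Bc = hermitian_matD(1)[OF B]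
  show "A + B \<in> carrier_mat N N" using Ac Bc by simp
  fix i j assume "i < N" "j < N"
  then show "(A + B) $$ (i,j) = cnj ((A + B) $$ (j,i))"
    using Ac Bc hermitian_matD(2)[OF A, of j i] hermitian_matD(2)[OF B, of j i] by simp
qed

lemma hermitian_one_mat: "hermitian_mat N (1\<^sub>m N)"
  unfolding hermitian_mat_def by simp

lemma hermitian_tensor_mat:
  assumes A: "hermitian_mat n A" and B: "hermitian_mat m B"
  shows "hermitian_mat (n*m) (tensor_mat A B)"
  unfolding hermitian_mat_def
proof (intro conjI allI impI)
  note Ac = hermitian_matD(1)[OF A] and Bc = hermitian_matD(1)[OF B]
  show "tensor_mat A B \<in> carrier_mat (n*m) (n*m)" unfolding tensor_mat_def using Ac Bc by auto
  fix x y assume x: "x < n*m" and y: "y < n*m"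
  then have "m > 0" by (cases m) auto
  then have "x div m < n" "y div m < n" "x mod m < m" "y mod m < m"
    using x y by (auto simp: div_less_iff_less_mult mult.commute)
  then show "tensor_mat A B $$ (x,y) = cnj (tensor_mat A B $$ (y,x))"
    unfolding tensor_mat_def using Ac Bc x y by (simp add: hermitian_matD(2)[OF A] hermitian_matD(2)[OF B])
qed

lemma hermitian_H_tot:
  "hermitian_mat n HS \<Longrightarrow> hermitian_mat m HA \<Longrightarrow> hermitian_mat (n*m) (H_tot n m HS HA)"
  unfolding H_tot_def
  by (intro hermitian_mat_add hermitian_tensor_mat hermitian_one_mat)

lemma H_tot_mult_vec:
  assumes HS: "HS \<in> carrier_mat n n" and HA: "HA \<in> carrier_mat m m"
    and \<Phi>: "\<Phi> \<in> carrier_vec (n*m)" and i: "i < n" and a: "a < m"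
  shows "(H_tot n m HS HA *\<^sub>v \<Phi>) $ (i*m + a)
    = (\<Sum>i'<n. HS$$(i,i') * \<Phi> $ (i'*m + a)) + (\<Sum>a'<m. HA$$(a,a') * \<Phi> $ (i*m + a'))"
proof -
  have H: "H_tot n m HS HA \<in> carrier_mat (n*m) (n*m)" using HS HA unfolding H_tot_def tensor_mat_def by auto
  have entry: "H_tot n m HS HA $$ (i*m + a, i'*m + a')
      = HS$$(i,i') * (if a = a' then 1 else 0) + (if i = i' then 1 else 0) * HA$$(a,a')"
    if "i' < n" "a' < m" for i' a'
    using HS HA i a that tensor_index_less[OF i a] tensor_index_less[OF that] unfolding H_tot_def tensor_mat_def
    by simp
  have "(H_tot n m HS HA *\<^sub>v \<Phi>) $ (i*m + a)
      = (\<Sum>i'<n. \<Sum>a'<m. H_tot n m HS HA $$ (i*m + a, i'*m + a') * \<Phi> $ (i'*m + a'))"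
    unfolding mult_mat_vec_sum[OF H \<Phi> tensor_index_less[OF i a]] by (rule sum_lessThan_mult)
  also have "\<dots> = (\<Sum>i'<n. HS$$(i,i') * \<Phi> $ (i'*m + a)
      + (if i' = i then (\<Sum>a'<m. HA$$(a,a') * \<Phi> $ (i'*m + a')) else 0))"
  proof (intro sum.cong refl)
    fix i' assume i': "i' \<in> {..<n}"
    have "(\<Sum>a'<m. H_tot n m HS HA $$ (i*m + a, i'*m + a') * \<Phi> $ (i'*m + a'))
        = (\<Sum>a'<m. (if a' = a then HS$$(i,i') * \<Phi> $ (i'*m + a') else 0)
          + (if i' = i then HA$$(a,a') * \<Phi> $ (i'*m + a') else 0))"
      using i' by (intro sum.cong refl) (auto simp: entry distrib_right)
    then show "(\<Sum>a'<m. H_tot n m HS HA $$ (i*m + a, i'*m + a') * \<Phi> $ (i'*m + a'))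
        = HS$$(i,i') * \<Phi> $ (i'*m + a) + (if i' = i then (\<Sum>a'<m. HA$$(a,a') * \<Phi> $ (i'*m + a')) else 0)"
      using a by (cases "i' = i") (simp_all add: sum.distrib)
  qed
  also have "\<dots> = (\<Sum>i'<n. HS$$(i,i') * \<Phi> $ (i'*m + a)) + (\<Sum>a'<m. HA$$(a,a') * \<Phi> $ (i*m + a'))"
    using i a by (simp add: sum.distrib)
  finally show ?thesis .
qed

lemma ptrace2_ketbra:
  assumes "\<Phi> \<in> carrier_vec (n*m)" "i < n" "k < n"
  shows "ptrace2 n m (ketbra \<Phi> \<Phi>) $$ (i,k) = (\<Sum>a<m. \<Phi> $ (i*m + a) * cnj (\<Phi> $ (k*m + a)))"
  unfolding ptrace2_def ketbra_def using assms tensor_index_less[of _ n _ m]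
  by (auto intro!: sum.cong)

definition tensor_column :: "nat \<Rightarrow> nat \<Rightarrow> complex vec \<Rightarrow> nat \<Rightarrow> complex vec" where
  "tensor_column n m \<Phi> a = vec n (\<lambda>i. \<Phi> $ (i*m + a))"

lemma tensor_column_carrier [simp]: "tensor_column n m \<Phi> a \<in> carrier_vec n"
  unfolding tensor_column_def by simp

lemma H_tot_shift_norm_eigenbasis:
  fixes c :: complex
  assumes \<psi>: "orthonormal_basis n \<psi>" and HS: "HS \<in> carrier_mat n n" and HA: "HA \<in> carrier_mat m m"
    and \<Phi>: "\<Phi> \<in> carrier_vec (n*m)"
  shows "(\<Sum>x<n*m. (cmod ((H_tot n m HS HA *\<^sub>v \<Phi>) $ x - c * \<Phi> $ x))^2)
    = (\<Sum>k<n. \<Sum>a<m. (cmod ((\<Sum>j<n. braket (\<psi> k) HS (\<psi> j) * (tensor_column n m \<Phi> a \<bullet>c \<psi> j))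
        + (\<Sum>a'<m. (HA $$ (a,a') - (if a = a' then c else 0)) * (tensor_column n m \<Phi> a' \<bullet>c \<psi> k))))^2)"
proof -
  note \<psi>c = orthonormal_basis_carrier[OF \<psi>]
  define F where "F = tensor_column n m \<Phi>"
  define X where "X a = vec n (\<lambda>i. (HS *\<^sub>v F a) $ i + (\<Sum>a'<m. (HA $$ (a,a') - (if a = a' then c else 0)) * F a' $ i))" for a
  have X: "X a \<in> carrier_vec n" for a unfolding X_def by simp
  have "(H_tot n m HS HA *\<^sub>v \<Phi>) $ (i*m + a) - c * \<Phi> $ (i*m + a) = X a $ i" if "i < n" "a < m" for i a
  proof -
    have "(\<Sum>a'<m. (if a = a' then c else 0) * \<Phi> $ (i*m + a')) = (\<Sum>a'<m. if a' = a then c * \<Phi> $ (i*m + a') else 0)"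
      by (rule sum.cong) auto
    then show ?thesis
      using that HS unfolding H_tot_mult_vec[OF HS HA \<Phi> that] X_def F_def tensor_column_def
      by (simp add: mult_mat_vec_sum[OF HS] left_diff_distrib sum_subtractf del: index_mult_mat_vec)
  qed
  then have "(\<Sum>x<n*m. (cmod ((H_tot n m HS HA *\<^sub>v \<Phi>) $ x - c * \<Phi> $ x))^2)
      = (\<Sum>i<n. \<Sum>a<m. (cmod (X a $ i))^2)"
    unfolding sum_lessThan_mult by (intro sum.cong refl) simp
  also have "\<dots> = (\<Sum>a<m. \<Sum>i<n. (cmod (X a $ i))^2)" by (rule sum.swap)
  also have "\<dots> = (\<Sum>a<m. \<Sum>k<n. (cmod (X a \<bullet>c \<psi> k))^2)"
    by (simp add: orthonormal_basis_parseval[OF \<psi> X])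
  also have "\<dots> = (\<Sum>k<n. \<Sum>a<m. (cmod (X a \<bullet>c \<psi> k))^2)" by (rule sum.swap)
  also have "\<dots> = (\<Sum>k<n. \<Sum>a<m. (cmod ((\<Sum>j<n. braket (\<psi> k) HS (\<psi> j) * (F a \<bullet>c \<psi> j))
        + (\<Sum>a'<m. (HA $$ (a,a') - (if a = a' then c else 0)) * (F a' \<bullet>c \<psi> k))))^2)"
  proof (intro sum.cong refl arg_cong[where f = "\<lambda>z. (cmod z)^2"])
    fix k a assume "k \<in> {..<n}"
    then have k: "\<psi> k \<in> carrier_vec n" using \<psi>c by simp
    have "(\<Sum>i<n. (\<Sum>a'<m. (HA $$ (a,a') - (if a = a' then c else 0)) * F a' $ i) * cnj (\<psi> k $ i))
        = (\<Sum>a'<m. (HA $$ (a,a') - (if a = a' then c else 0)) * (F a' \<bullet>c \<psi> k))"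
      unfolding sum_distrib_right
      using k by (subst sum.swap) (simp add: F_def cscalar_prod_sum[of _ n] sum_distrib_left sum_distrib_right mult_ac)
    then have "X a \<bullet>c \<psi> k = (HS *\<^sub>v F a) \<bullet>c \<psi> k
        + (\<Sum>a'<m. (HA $$ (a,a') - (if a = a' then c else 0)) * (F a' \<bullet>c \<psi> k))"
      using HS k unfolding X_def by (simp add: F_def cscalar_prod_sum[of _ n] distrib_right sum.distrib)
    then show "X a \<bullet>c \<psi> k = (\<Sum>j<n. braket (\<psi> k) HS (\<psi> j) * (F a \<bullet>c \<psi> j))
        + (\<Sum>a'<m. (HA $$ (a,a') - (if a = a' then c else 0)) * (F a' \<bullet>c \<psi> k))"
      using cscalar_prod_mult_vec_expansion[OF \<psi> HS _ k, of "F a"]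
      by (simp add: braket_def F_def mult.commute)
  qed
  finally show ?thesis unfolding F_def .
qed

lemma purification_coeffs_orthogonal:
  assumes pur: "purification n m \<rho> \<Phi>" and sd: "spectral_decomp n \<rho> p \<psi>" and j: "j < n" and k: "k < n"
  shows "(\<Sum>a<m. (tensor_column n m \<Phi> a \<bullet>c \<psi> j) * cnj (tensor_column n m \<Phi> a \<bullet>c \<psi> k))
    = (if j = k then complex_of_real (p j) else 0)"
proof -
  have \<psi>: "orthonormal_basis n \<psi>" using sd unfolding spectral_decomp_iff by auto
  note \<psi>c = orthonormal_basis_carrier[OF \<psi>]
  have \<Phi>: "\<Phi> \<in> carrier_vec (n*m)" and ptr: "ptrace2 n m (ketbra \<Phi> \<Phi>) = \<rho>"
    using pur unfolding purification_def by auto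
  have \<rho>c: "\<rho> \<in> carrier_mat n n" unfolding ptr[symmetric] ptrace2_def by simp
  have "(\<Sum>a<m. (tensor_column n m \<Phi> a \<bullet>c \<psi> j) * cnj (tensor_column n m \<Phi> a \<bullet>c \<psi> k))
      = (\<Sum>a<m. \<Sum>i<n. \<Sum>i'<n. (\<Phi> $ (i*m + a) * cnj (\<Phi> $ (i'*m + a))) * (\<psi> k $ i' * cnj (\<psi> j $ i)))"
    using \<psi>c j k by (simp add: cscalar_prod_sum[of _ n] tensor_column_def cnj_sum sum_product mult_ac)
      (rule sum.cong[OF refl], rule sum.swap)
  also have "\<dots> = (\<Sum>i<n. \<Sum>i'<n. \<rho> $$ (i,i') * (\<psi> k $ i' * cnj (\<psi> j $ i)))"
    by (subst sum_swap3[symmetric])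
      (simp add: ptr[symmetric] ptrace2_ketbra[OF \<Phi>] flip: sum_distrib_right)
  also have "\<dots> = (\<rho> *\<^sub>v \<psi> k) \<bullet>c \<psi> j"
    using \<rho>c \<psi>c j k by (simp add: cscalar_prod_sum[of _ n] mult_mat_vec_sum sum_distrib_left sum_distrib_right mult_ac
        del: index_mult_mat_vec)
  also have "\<dots> = complex_of_real (p k) * (\<psi> k \<bullet>c \<psi> j)"
    using \<psi>c j k by (simp add: spectral_decomp_eigenvector[OF sd k] cscalar_prod_smult_left[OF \<psi>c \<psi>c])
  finally show ?thesis using \<psi> j k unfolding orthonormal_basis_def by auto
qed

theorem QFI_le_variance_purification:
  assumes HS: "hermitian_mat n HS" and HA: "hermitian_mat m HA"
    and \<rho>: "density_mat n \<rho>" and pur: "purification n m \<rho> \<Phi>"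
  shows "QFI n \<rho> HS \<le> 4 * variance (H_tot n m HS HA) \<Phi>"
proof -
  obtain p \<psi> where sd: "spectral_decomp n \<rho> p \<psi>"
    and QFI: "QFI n \<rho> HS = fisher_sum n p (\<lambda>j k. braket (\<psi> j) HS (\<psi> k))"
    using QFI_eq_fisher_sum \<rho> unfolding density_mat_def by blast
  have \<psi>: "orthonormal_basis n \<psi>" using sd unfolding spectral_decomp_iff by auto
  note \<psi>c = orthonormal_basis_carrier[OF \<psi>]
  have \<Phi>: "\<Phi> \<in> carrier_vec (n*m)" and unit: "\<Phi> \<bullet>c \<Phi> = 1" using pur unfolding purification_def by auto
  define H where "H = H_tot n m HS HA"
  define l where "l = Re (braket \<Phi> H \<Phi>)"
  have "variance H \<Phi> = (\<Sum>x<n*m. (cmod ((H *\<^sub>v \<Phi>) $ x - complex_of_real l * \<Phi> $ x))^2)"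
    unfolding l_def by (rule variance_eq_norm_centered[OF hermitian_H_tot[OF HS HA, folded H_def] \<Phi> unit])
  also have "\<dots> = (\<Sum>k<n. \<Sum>a<m. (cmod ((\<Sum>j<n. braket (\<psi> k) HS (\<psi> j) * (tensor_column n m \<Phi> a \<bullet>c \<psi> j))
        + (\<Sum>a'<m. (HA $$ (a,a') - (if a = a' then complex_of_real l else 0)) * (tensor_column n m \<Phi> a' \<bullet>c \<psi> k))))^2)"
    unfolding H_def
    by (rule H_tot_shift_norm_eigenbasis[OF \<psi> hermitian_matD(1)[OF HS] hermitian_matD(1)[OF HA] \<Phi>])
  finally have var: "variance H \<Phi> = \<dots>" .
  have h: "braket (\<psi> k) HS (\<psi> j) = cnj (braket (\<psi> j) HS (\<psi> k))" if "j < n" "k < n" for j k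
    using braket_hermitian[OF HS \<psi>c \<psi>c] that by blast
  have G: "HA $$ (a',a) - (if a' = a then complex_of_real l else 0)
      = cnj (HA $$ (a,a') - (if a = a' then complex_of_real l else 0))" if "a < m" "a' < m" for a a'
    using that by (auto simp: hermitian_matD(2)[OF HA])
  from fisher_sum_le_local_norm[OF density_mat_eigenvalues(1)[OF \<rho> sd]
      purification_coeffs_orthogonal[OF pur sd] h G]
  have "fisher_sum n p (\<lambda>j k. braket (\<psi> j) HS (\<psi> k)) \<le> 4 * variance H \<Phi>"
    unfolding var .
  then show ?thesis unfolding QFI H_def .
qed

text \<open>\<Sum>_a \<surd>p_a \<psi>_a \<otimes> e_a, with the index (i, a) of the product stored at i * n + a.\<close>

definition canonical_purification :: "nat \<Rightarrow> (nat \<Rightarrow> real) \<Rightarrow> (nat \<Rightarrow> complex vec) \<Rightarrow> complex vec" where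
  "canonical_purification n p \<psi> = vec (n*n) (\<lambda>x. complex_of_real (sqrt (p (x mod n))) * \<psi> (x mod n) $ (x div n))"

definition optimal_ancilla_hamiltonian ::
    "nat \<Rightarrow> (nat \<Rightarrow> real) \<Rightarrow> (nat \<Rightarrow> complex vec) \<Rightarrow> complex mat \<Rightarrow> complex mat" where
  "optimal_ancilla_hamiltonian n p \<psi> HS = mat n n (\<lambda>(a,k).
     - complex_of_real (2 * sqrt (p a) * sqrt (p k) / (p a + p k)) * braket (\<psi> k) HS (\<psi> a))"

lemma canonical_purification_index:
  "i < n \<Longrightarrow> a < n \<Longrightarrow> canonical_purification n p \<psi> $ (i*n + a) = complex_of_real (sqrt (p a)) * \<psi> a $ i"
  unfolding canonical_purification_def using tensor_index_less[of i n a n] by simp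

lemma canonical_purification_coeffs:
  assumes \<psi>: "orthonormal_basis n \<psi>" and j: "j < n" and a: "a < n"
  shows "tensor_column n n (canonical_purification n p \<psi>) a \<bullet>c \<psi> j = (if j = a then sqrt (p a) else 0)"
proof -
  have "tensor_column n n (canonical_purification n p \<psi>) a \<bullet>c \<psi> j
      = complex_of_real (sqrt (p a)) * (\<Sum>i<n. \<psi> a $ i * cnj (\<psi> j $ i))"
    using orthonormal_basis_carrier[OF \<psi> j] a
    by (simp add: cscalar_prod_sum[of _ n] tensor_column_def canonical_purification_index sum_distrib_left
        mult.assoc)
  then show ?thesis using orthonormal_basis_orthonormal[OF \<psi> a j] by auto
qed

lemma purification_canonical:
  assumes sd: "spectral_decomp n \<rho> p \<psi>" and p: "\<And>l. l < n \<Longrightarrow> p l \<ge> 0" and psum: "(\<Sum>l<n. p l) = 1"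
  shows "purification n n \<rho> (canonical_purification n p \<psi>)"
proof -
  have \<psi>: "orthonormal_basis n \<psi>"
    and \<rho>: "\<rho> = mat n n (\<lambda>(a,b). \<Sum>l<n. complex_of_real (p l) * (\<psi> l $ a * cnj (\<psi> l $ b)))"
    using sd unfolding spectral_decomp_iff by auto
  define \<Phi> where "\<Phi> = canonical_purification n p \<psi>"
  have \<Phi>: "\<Phi> \<in> carrier_vec (n*n)" unfolding \<Phi>_def canonical_purification_def by simp
  have entry: "(\<Sum>a<n. \<Phi> $ (i*n + a) * cnj (\<Phi> $ (k*n + a)))
      = (\<Sum>a<n. complex_of_real (p a) * (\<psi> a $ i * cnj (\<psi> a $ k)))" if "i < n" "k < n" for i k
    using that p by (intro sum.cong refl) (simp add: \<Phi>_def canonical_purification_index mult_ac flip: of_real_mult)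
  have "\<Phi> \<bullet>c \<Phi> = (\<Sum>i<n. \<Sum>a<n. \<Phi> $ (i*n + a) * cnj (\<Phi> $ (i*n + a)))"
    using \<Phi> by (simp add: cscalar_prod_sum[OF \<Phi> \<Phi>] sum_lessThan_mult)
  also have "\<dots> = (\<Sum>a<n. complex_of_real (p a) * (\<Sum>i<n. \<psi> a $ i * cnj (\<psi> a $ i)))"
    by (simp add: entry sum_distrib_left) (rule sum.swap)
  also have "\<dots> = 1" using psum by (simp add: orthonormal_basis_orthonormal[OF \<psi>] flip: of_real_sum)
  finally have "\<Phi> \<bullet>c \<Phi> = 1" .
  moreover have "ptrace2 n n (ketbra \<Phi> \<Phi>) = \<rho>"
    by (rule eq_matI) (simp_all add: \<rho> ptrace2_ketbra[OF \<Phi>] entry, simp_all add: ptrace2_def)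
  ultimately show ?thesis using \<Phi> unfolding purification_def \<Phi>_def by blast
qed

lemma hermitian_optimal_ancilla_hamiltonian:
  assumes "hermitian_mat n HS" "\<And>j. j < n \<Longrightarrow> \<psi> j \<in> carrier_vec n"
  shows "hermitian_mat n (optimal_ancilla_hamiltonian n p \<psi> HS)"
  unfolding hermitian_mat_def
proof (intro conjI allI impI)
  fix a k assume a: "a < n" and k: "k < n"
  have "braket (\<psi> k) HS (\<psi> a) = cnj (braket (\<psi> a) HS (\<psi> k))"
    by (rule braket_hermitian[OF assms(1) assms(2)[OF a] assms(2)[OF k]])
  moreover have "2 * sqrt (p a) * sqrt (p k) / (p a + p k) = 2 * sqrt (p k) * sqrt (p a) / (p k + p a)"
    by (simp add: ac_simps)
  ultimately show "optimal_ancilla_hamiltonian n p \<psi> HS $$ (a,k) = cnj (optimal_ancilla_hamiltonian n p \<psi> HS $$ (k,a))"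
    unfolding optimal_ancilla_hamiltonian_def using a k by (simp add: ac_simps)
qed (simp add: optimal_ancilla_hamiltonian_def)

lemma norm_H_tot_optimal:
  fixes p :: "nat \<Rightarrow> real"
  assumes HS: "hermitian_mat n HS" and \<psi>: "orthonormal_basis n \<psi>"
  defines "H \<equiv> H_tot n n HS (optimal_ancilla_hamiltonian n p \<psi> HS)" and "\<Phi> \<equiv> canonical_purification n p \<psi>"
  shows "(\<Sum>x<n*n. (cmod ((H *\<^sub>v \<Phi>) $ x))^2) = (\<Sum>k<n. \<Sum>a<n. (cmod (braket (\<psi> k) HS (\<psi> a)))^2 *
    (sqrt (p a) - 2 * sqrt (p a) * sqrt (p k) / (p a + p k) * sqrt (p k))^2)"
proof -
  define HA where "HA = optimal_ancilla_hamiltonian n p \<psi> HS"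
  have HA: "HA \<in> carrier_mat n n" unfolding HA_def optimal_ancilla_hamiltonian_def by simp
  have \<Phi>: "\<Phi> \<in> carrier_vec (n*n)" unfolding \<Phi>_def canonical_purification_def by simp
  have "(\<Sum>x<n*n. (cmod ((H *\<^sub>v \<Phi>) $ x))^2) = (\<Sum>x<n*n. (cmod ((H *\<^sub>v \<Phi>) $ x - 0 * \<Phi> $ x))^2)" by simp
  also have "\<dots> = (\<Sum>k<n. \<Sum>a<n. (cmod ((\<Sum>j<n. braket (\<psi> k) HS (\<psi> j) * (tensor_column n n \<Phi> a \<bullet>c \<psi> j))
        + (\<Sum>a'<n. (HA $$ (a,a') - (if a = a' then 0 else 0)) * (tensor_column n n \<Phi> a' \<bullet>c \<psi> k))))^2)"
    unfolding H_def HA_def[symmetric] by (rule H_tot_shift_norm_eigenbasis[OF \<psi> hermitian_matD(1)[OF HS] HA \<Phi>])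
  also have "\<dots> = (\<Sum>k<n. \<Sum>a<n. (cmod (braket (\<psi> k) HS (\<psi> a) *
      complex_of_real (sqrt (p a) - 2 * sqrt (p a) * sqrt (p k) / (p a + p k) * sqrt (p k))))^2)"
    unfolding \<Phi>_def HA_def optimal_ancilla_hamiltonian_def
    by (intro sum.cong refl) (simp add: canonical_purification_coeffs[OF \<psi>] if_distrib algebra_simps cong: if_cong)
  finally show ?thesis by (simp only: norm_mult norm_of_real power_mult_distrib power2_abs)
qed

theorem variance_optimal_purification_le_QFI:
  assumes HS: "hermitian_mat n HS" and \<rho>: "density_mat n \<rho>"
  shows "\<exists>HA \<Phi>. hermitian_mat n HA \<and> purification n n \<rho> \<Phi> \<and> 4 * variance (H_tot n n HS HA) \<Phi> \<le> QFI n \<rho> HS"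
proof -
  obtain p \<psi> where sd: "spectral_decomp n \<rho> p \<psi>"
    and QFI: "QFI n \<rho> HS = fisher_sum n p (\<lambda>j k. braket (\<psi> j) HS (\<psi> k))"
    using QFI_eq_fisher_sum \<rho> unfolding density_mat_def by blast
  have \<psi>: "orthonormal_basis n \<psi>" using sd unfolding spectral_decomp_iff by auto
  note \<psi>c = orthonormal_basis_carrier[OF \<psi>]
  note p = density_mat_eigenvalues[OF \<rho> sd]
  define HA where "HA = optimal_ancilla_hamiltonian n p \<psi> HS"
  define \<Phi> where "\<Phi> = canonical_purification n p \<psi>"
  have HA: "hermitian_mat n HA" unfolding HA_def by (rule hermitian_optimal_ancilla_hamiltonian[OF HS \<psi>c])
  have pur: "purification n n \<rho> \<Phi>" unfolding \<Phi>_def by (rule purification_canonical[OF sd p])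
  then have \<Phi>: "\<Phi> \<in> carrier_vec (n*n)" unfolding purification_def by blast
  have "variance (H_tot n n HS HA) \<Phi> \<le> (\<Sum>x<n*n. (cmod ((H_tot n n HS HA *\<^sub>v \<Phi>) $ x))^2)"
    unfolding variance_eq_norm[OF hermitian_H_tot[OF HS HA] \<Phi>] by simp
  moreover have "cmod (braket (\<psi> k) HS (\<psi> j)) = cmod (braket (\<psi> j) HS (\<psi> k))" if "j < n" "k < n" for j k
    using braket_hermitian[OF HS \<psi>c[OF that(1)] \<psi>c[OF that(2)]] by simp
  note fisher_sum_eq_optimal_local_norm[where n = n and p = p and h = "\<lambda>k j. braket (\<psi> k) HS (\<psi> j)",
      OF p(1) this]
  ultimately have "4 * variance (H_tot n n HS HA) \<Phi> \<le> QFI n \<rho> HS"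
    unfolding QFI HA_def \<Phi>_def norm_H_tot_optimal[OF HS \<psi>] by simp
  then show ?thesis using HA pur by blast
qed

theorem theorem2:
  fixes n :: nat and HS \<rho> :: "complex mat"
  assumes "hermitian_mat n HS" and "density_mat n \<rho>"
  shows "(\<forall>m HA \<Phi>. hermitian_mat m HA \<and> purification n m \<rho> \<Phi> \<longrightarrow>
            QFI n \<rho> HS \<le> QFI (n*m) (ketbra \<Phi> \<Phi>) (H_tot n m HS HA)) \<and>
         (\<exists>m HA \<Phi>. hermitian_mat m HA \<and> purification n m \<rho> \<Phi> \<and>
            QFI n \<rho> HS = QFI (n*m) (ketbra \<Phi> \<Phi>) (H_tot n m HS HA)) \<and>
         (\<forall>m HA \<Phi>. hermitian_mat m HA \<and> purification n m \<rho> \<Phi> \<longrightarrow>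
            QFI n \<rho> HS \<le> 4 * variance (H_tot n m HS HA) \<Phi>) \<and>
         (\<exists>m HA \<Phi>. hermitian_mat m HA \<and> purification n m \<rho> \<Phi> \<and>
            QFI n \<rho> HS = 4 * variance (H_tot n m HS HA) \<Phi>)"
proof -
  have lower: "QFI n \<rho> HS \<le> 4 * variance (H_tot n m HS HA) \<Phi>"
    if "hermitian_mat m HA" "purification n m \<rho> \<Phi>" for m HA \<Phi>
    using QFI_le_variance_purification[OF assms(1) that(1) assms(2) that(2)] .
  have pure: "QFI (n*m) (ketbra \<Phi> \<Phi>) (H_tot n m HS HA) = 4 * variance (H_tot n m HS HA) \<Phi>"
    if "hermitian_mat m HA" "purification n m \<rho> \<Phi>" for m HA \<Phi>
    using QFI_pure[OF hermitian_H_tot[OF assms(1) that(1)]] that(2) unfolding purification_def by blast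
  obtain HA \<Phi> where HA: "hermitian_mat n HA" and pur: "purification n n \<rho> \<Phi>"
    and "4 * variance (H_tot n n HS HA) \<Phi> \<le> QFI n \<rho> HS"
    using variance_optimal_purification_le_QFI[OF assms] by blast
  then have opt: "QFI n \<rho> HS = 4 * variance (H_tot n n HS HA) \<Phi>"
    using lower[OF HA pur] by linarith
  show ?thesis
    using lower pure opt pure[OF HA pur] HA pur by metis
qed

end
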